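(* Let $Q$ be a quadrangulation with a strong labeling $\phi$, and let $X$ be the $2$-orientation induced by $\phi$. Let $C$ be a directed cycle in $X$ and let $X_C$ be the $2$-orientation obtained from $X$ by reversing all edges of $C$. Then the strong labeling corresponding to $X_C$ is obtained from $\phi$ by complementing (replacing $\ell$ by $1-\ell$) the labels of all angles lying inside $C$, and leaving all other labels unchanged.
   Context: A quadrangulation is a simple plane graph with at least four vertices all of whose faces (including the outer face) are bounded by $4$-cycles; it is bipartite, with vertices properly colored black and white. An angle is an incidence of a vertex with a face; an angle lies inside $C$ if its face lies in the interior of $C$. A strong labeling of $Q$ is a map from the angles of $Q$ to $\{0,1\}$ such that: (G0) the two black vertices on the outer face are named $s_0$ and $s_1$, and all angles at $s_i$ are labeled $i$; (G1) for each vertex $v\notin\{s_0,s_1\}$ the labels around $v$ form one non-empty cyclic interval of $1$s and one non-empty cyclic interval of $0$s; (G2) for each edge, the two labels on the two sides of the edge coincide at one endpoint and differ at the other; (G3) the labels in each bounded face, read cyclically, are $0,0,1,1$, and reading the labels of the outer face in clockwise order starting at $s_0$ they are $0,0,1,1$. A strong labeling induces an orientation of the edges: each edge is oriented towards the endpoint at which its two labels coincide; this is a $2$-orientation, i.e. every vertex other than $s_0,s_1$ has outdegree exactly $2$. The map sending a strong labeling to its induced $2$-orientation is a bijection between strong labelings of $Q$ (with $s_0$ fixed) and $2$-orientations of $Q$; "the strong labeling corresponding to" a $2$-orientation refers to this bijection. *)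

theory Defs
  imports Main
begin

(* D      : finite set of darts (half-edges)
   alpha  : edge involution (dart -> reverse dart)
   sigma  : rotation around a vertex (next dart in COUNTERCLOCKWISE order)
   vert   : tail vertex of a dart; the darts at a vertex are one sigma-orbit
   Faces are the orbits of  phi = sigma o alpha.  With sigma counterclockwise,
   phi traverses the outer face in clockwise order.
   Angles: the angle (vertex-face incidence) represented by dart d is the
   corner at  vert d  between  sigma^-1 d  and  d; it lies in the face (phi-orbit)
   of d.  In a simple quadrangulation this is a bijection darts <-> angles. *)

definition orb :: "('d \<Rightarrow> 'd) \<Rightarrow> 'd \<Rightarrow> 'd set" where
  "orb f x = {(f ^^ n) x | n. True}"

definition fphi :: "('d \<Rightarrow> 'd) \<Rightarrow> ('d \<Rightarrow> 'd) \<Rightarrow> 'd \<Rightarrow> 'd" where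
  "fphi alpha sigma = sigma \<circ> alpha"

definition quadrangulation ::
  "'d set \<Rightarrow> ('d \<Rightarrow> 'd) \<Rightarrow> ('d \<Rightarrow> 'd) \<Rightarrow> ('d \<Rightarrow> 'v) \<Rightarrow> 'd \<Rightarrow> ('v \<Rightarrow> bool)
    \<Rightarrow> 'v \<Rightarrow> 'v \<Rightarrow> bool" where
  "quadrangulation D alpha sigma vert d0 black s0 s1 \<longleftrightarrow>
     finite D \<and>
     bij_betw alpha D D \<and> bij_betw sigma D D \<and>
     (\<forall>d\<in>D. alpha (alpha d) = d \<and> alpha d \<noteq> d) \<and>
     (\<forall>d\<in>D. \<forall>e\<in>D. vert d = vert e \<longleftrightarrow> e \<in> orb sigma d) \<and>
     \<comment> \<open>connected\<close>
     (\<forall>d\<in>D. \<forall>e\<in>D. (d, e) \<in> ({(x, alpha x) | x. x \<in> D} \<union> {(x, sigma x) | x. x \<in> D})\<^sup>*) \<and>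
     \<comment> \<open>genus 0 (Euler's formula): the map is a plane embedding\<close>
     int (card (vert ` D)) - int (card D div 2)
        + int (card {orb (fphi alpha sigma) d | d. d \<in> D}) = 2 \<and>
     \<comment> \<open>simple: no loops, no multiple edges\<close>
     (\<forall>d\<in>D. vert (alpha d) \<noteq> vert d) \<and>
     (\<forall>d\<in>D. \<forall>e\<in>D. vert d = vert e \<and> vert (alpha d) = vert (alpha e) \<longrightarrow> d = e) \<and>
     \<comment> \<open>at least four vertices\<close>
     card (vert ` D) \<ge> 4 \<and>
     \<comment> \<open>every face (including the outer one) is bounded by a 4-cycle\<close>
     (\<forall>d\<in>D. card (orb (fphi alpha sigma) d) = 4 \<and>
             card (vert ` orb (fphi alpha sigma) d) = 4) \<and>
     d0 \<in> D \<and>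
     \<comment> \<open>proper 2-colouring\<close>
     (\<forall>d\<in>D. black (vert d) \<noteq> black (vert (alpha d))) \<and>
     \<comment> \<open>s0, s1 are the two black vertices of the outer face\<close>
     s0 \<noteq> s1 \<and>
     {v \<in> vert ` orb (fphi alpha sigma) d0. black v} = {s0, s1}"

definition strong_labeling ::
  "'d set \<Rightarrow> ('d \<Rightarrow> 'd) \<Rightarrow> ('d \<Rightarrow> 'd) \<Rightarrow> ('d \<Rightarrow> 'v) \<Rightarrow> 'd \<Rightarrow> 'v \<Rightarrow> 'v
    \<Rightarrow> ('d \<Rightarrow> nat) \<Rightarrow> bool" where
  "strong_labeling D alpha sigma vert d0 s0 s1 lab \<longleftrightarrow>
     (\<forall>d\<in>D. lab d \<in> {0, 1}) \<and>
     \<comment> \<open>(G0)\<close>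
     (\<forall>d\<in>D. (vert d = s0 \<longrightarrow> lab d = 0) \<and> (vert d = s1 \<longrightarrow> lab d = 1)) \<and>
     \<comment> \<open>(G1): around v the labels form one nonempty cyclic interval of 1s
         and one nonempty cyclic interval of 0s\<close>
     (\<forall>v\<in>vert ` D - {s0, s1}. \<exists>d\<in>D. vert d = v \<and>
        (\<exists>k. 0 < k \<and> k < card (orb sigma d) \<and>
           (\<forall>i<k. lab ((sigma ^^ i) d) = 1) \<and>
           (\<forall>i. k \<le> i \<and> i < card (orb sigma d) \<longrightarrow> lab ((sigma ^^ i) d) = 0))) \<and>
     \<comment> \<open>(G2): the two angles beside edge {d, alpha d} at vert d are d and sigma d\<close>
     (\<forall>d\<in>D. (lab d = lab (sigma d)) \<noteq> (lab (alpha d) = lab (sigma (alpha d)))) \<and>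
     \<comment> \<open>(G3) bounded faces\<close>
     (\<forall>d\<in>D. orb (fphi alpha sigma) d \<noteq> orb (fphi alpha sigma) d0 \<longrightarrow>
        (\<exists>k. lab ((fphi alpha sigma ^^ k) d) = 0 \<and> lab ((fphi alpha sigma ^^ (k+1)) d) = 0 \<and>
             lab ((fphi alpha sigma ^^ (k+2)) d) = 1 \<and> lab ((fphi alpha sigma ^^ (k+3)) d) = 1)) \<and>
     \<comment> \<open>(G3) outer face, clockwise (= phi order) starting at s0\<close>
     (\<forall>d\<in>orb (fphi alpha sigma) d0. vert d = s0 \<longrightarrow>
        lab d = 0 \<and> lab (fphi alpha sigma d) = 0 \<and>
        lab ((fphi alpha sigma ^^ 2) d) = 1 \<and> lab ((fphi alpha sigma ^^ 3) d) = 1)"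

(* induced orientation: the set of darts d (from vert d to vert (alpha d)) whose
   edge is oriented towards vert (alpha d), i.e. labels coincide at the head *)
definition induced_orientation ::
  "'d set \<Rightarrow> ('d \<Rightarrow> 'd) \<Rightarrow> ('d \<Rightarrow> 'd) \<Rightarrow> ('d \<Rightarrow> nat) \<Rightarrow> 'd set" where
  "induced_orientation D alpha sigma lab = {d \<in> D. lab (alpha d) = lab (sigma (alpha d))}"

definition directed_cycle ::
  "('d \<Rightarrow> 'd) \<Rightarrow> ('d \<Rightarrow> 'v) \<Rightarrow> 'd set \<Rightarrow> 'd list \<Rightarrow> bool" where
  "directed_cycle alpha vert X cs \<longleftrightarrow>
     length cs \<ge> 3 \<and> set cs \<subseteq> X \<and> distinct (map vert cs) \<and>
     (\<forall>i<length cs. vert (alpha (cs ! i)) = vert (cs ! ((i + 1) mod length cs)))"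

definition reverse_cycle :: "('d \<Rightarrow> 'd) \<Rightarrow> 'd set \<Rightarrow> 'd list \<Rightarrow> 'd set" where
  "reverse_cycle alpha X cs = (X - set cs) \<union> alpha ` set cs"

(* angles inside C: their face cannot be reached from the outer face in the dual
   without crossing an edge of C *)
definition dual_step_avoiding ::
  "'d set \<Rightarrow> ('d \<Rightarrow> 'd) \<Rightarrow> ('d \<Rightarrow> 'd) \<Rightarrow> 'd list \<Rightarrow> ('d \<times> 'd) set" where
  "dual_step_avoiding D alpha sigma cs =
     {(d, e). d \<in> D \<and> e \<in> orb (fphi alpha sigma) d} \<union>
     {(d, alpha d) | d. d \<in> D \<and> d \<notin> set cs \<and> alpha d \<notin> set cs}"

definition inside_cycle ::
  "'d set \<Rightarrow> ('d \<Rightarrow> 'd) \<Rightarrow> ('d \<Rightarrow> 'd) \<Rightarrow> 'd \<Rightarrow> 'd list \<Rightarrow> 'd \<Rightarrow> bool" where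
  "inside_cycle D alpha sigma d0 cs d \<longleftrightarrow>
     d \<in> D \<and> (d0, d) \<notin> (dual_step_avoiding D alpha sigma cs)\<^sup>*"

end

theory Submission
  imports Defs
begin

text \<open>Cutting the plane map along the directed cycle \<open>C\<close> splits the dual graph into exactly two
  classes, the darts on either side of \<open>C\<close>. This discrete Jordan curve theorem comes from Euler's
  formula through a potential \<open>|S| + 2 c(S) - 2 c\<^sup>*(S)\<close>, where \<open>c(S)\<close> and \<open>c\<^sup>*(S)\<close> count
  the components of the subgraph with edge set \<open>S\<close> and of the dual graph without the duals of
  \<open>S\<close>: it never decreases as edges are added and takes the same value for no edges and all edges.

  Hence being inside \<open>C\<close> is constant on faces and across edges not on \<open>C\<close>, and switches across
  the edges of \<open>C\<close>. Complementing the labels inside \<open>C\<close> therefore preserves (G2) and the face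
  rule (G3) (a complemented \<open>0, 0, 1, 1\<close> is a rotated \<open>0, 0, 1, 1\<close>) and changes the induced
  orientation exactly on \<open>C\<close>. Rule (G0) survives because \<open>s\<^sub>0\<close> and \<open>s\<^sub>1\<close> have no outgoing
  edges, so \<open>C\<close> avoids them and they lie on the outer face, outside \<open>C\<close>. Rule (G1) survives because
  the number of label changes around a vertex is its outdegree, which reversing \<open>C\<close> preserves.\<close>

lemma bij_betw_funpow_in: "bij_betw f D D \<Longrightarrow> x \<in> D \<Longrightarrow> (f ^^ n) x \<in> D"
  using bij_betw_funpow bij_betwE by blast

lemma bij_betw_funpow_cancel:
  assumes "bij_betw f D D" "x \<in> D" "i \<le> j" "(f ^^ i) x = (f ^^ j) x"
  shows "(f ^^ (j - i)) x = x"
proof -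
  have "(f ^^ i) ((f ^^ (j - i)) x) = (f ^^ (i + (j - i))) x"
    by (simp add: funpow_add)
  then have "(f ^^ i) ((f ^^ (j - i)) x) = (f ^^ i) x"
    using assms(3,4) by simp
  moreover have "inj_on (f ^^ i) D"
    using bij_betw_funpow[OF assms(1)] bij_betw_imp_inj_on by blast
  ultimately show ?thesis
    using bij_betw_funpow_in[OF assms(1,2)] assms(2) by (meson inj_on_def)
qed

lemma bij_betw_funpow_period:
  assumes "finite D" "bij_betw f D D" "x \<in> D"
  obtains n where "n > 0" "(f ^^ n) x = x"
proof -
  have "(\<lambda>i. (f ^^ i) x) ` {..card D} \<subseteq> D"
    using bij_betw_funpow_in[OF assms(2,3)] by blast
  then have "\<not> inj_on (\<lambda>i. (f ^^ i) x) {..card D}"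
    using card_inj_on_le[of _ "{..card D}" D] assms(1) by fastforce
  then obtain i j where "i < j" "(f ^^ i) x = (f ^^ j) x"
    unfolding inj_on_def by (metis linorder_neqE_nat)
  then show thesis
    using that bij_betw_funpow_cancel[OF assms(2,3)] by (metis less_imp_le zero_less_diff)
qed

lemma funpow_in_orb: "(f ^^ n) x \<in> orb f x"
  unfolding orb_def by auto

lemma self_in_orb: "x \<in> orb f x"
  using funpow_in_orb[of 0] by simp

lemma orb_funpow_closed: "y \<in> orb f x \<Longrightarrow> (f ^^ n) y \<in> orb f x"
proof -
  assume "y \<in> orb f x"
  then obtain m where "y = (f ^^ m) x" unfolding orb_def by auto
  then have "(f ^^ n) y = (f ^^ (n + m)) x" by (simp add: funpow_add)
  then show ?thesis using funpow_in_orb by metis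
qed

lemma orb_closed: "y \<in> orb f x \<Longrightarrow> f y \<in> orb f x"
  using orb_funpow_closed[of y f x 1] by simp

lemma orb_trans: "y \<in> orb f x \<Longrightarrow> z \<in> orb f y \<Longrightarrow> z \<in> orb f x"
  unfolding orb_def[of f y] using orb_funpow_closed by auto

lemma orb_subset: "bij_betw f D D \<Longrightarrow> x \<in> D \<Longrightarrow> orb f x \<subseteq> D"
  unfolding orb_def using bij_betw_funpow_in by auto

lemma orb_sym:
  assumes "finite D" "bij_betw f D D" "x \<in> D" "y \<in> orb f x"
  shows "x \<in> orb f y"
proof -
  obtain m where m: "y = (f ^^ m) x" using assms(4) unfolding orb_def by auto
  obtain n where n: "n > 0" "(f ^^ n) x = x" using bij_betw_funpow_period[OF assms(1-3)] .
  have "(f ^^ (n * m - m)) y = (f ^^ (n * m - m + m)) x"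
    unfolding m by (simp add: funpow_add)
  also have "\<dots> = (f ^^ (n * m)) x"
  proof -
    have "m \<le> n * m" using n(1) by simp
    then show ?thesis by simp
  qed
  also have "\<dots> = x"
    using funpow_mod_eq[OF n(2), of "n * m"] by simp
  finally show ?thesis using funpow_in_orb by metis
qed

lemma orb_eq:
  assumes "finite D" "bij_betw f D D" "x \<in> D" "y \<in> orb f x"
  shows "orb f y = orb f x"
  using orb_trans[OF assms(4)] orb_trans[OF orb_sym[OF assms]] by blast

lemma orb_funpow_enum:
  assumes "finite D" "bij_betw f D D" "x \<in> D"
  shows "card (orb f x) > 0" "(f ^^ card (orb f x)) x = x"
    "inj_on (\<lambda>i. (f ^^ i) x) {..<card (orb f x)}"
    "orb f x = (\<lambda>i. (f ^^ i) x) ` {..<card (orb f x)}"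
proof -
  define n where "n = (LEAST n. n > 0 \<and> (f ^^ n) x = x)"
  obtain n0 where "n0 > 0" "(f ^^ n0) x = x" using bij_betw_funpow_period[OF assms] .
  then have n: "n > 0" "(f ^^ n) x = x"
    unfolding n_def by (metis (mono_tags, lifting) LeastI)+
  have min: "(f ^^ k) x \<noteq> x" if "0 < k" "k < n" for k
    using not_less_Least[of k "\<lambda>n. n > 0 \<and> (f ^^ n) x = x"] that unfolding n_def by blast
  have im: "orb f x = (\<lambda>i. (f ^^ i) x) ` {..<n}"
  proof
    show "orb f x \<subseteq> (\<lambda>i. (f ^^ i) x) ` {..<n}"
    proof
      fix y assume "y \<in> orb f x"
      then obtain m where "y = (f ^^ (m mod n)) x"
        unfolding orb_def using funpow_mod_eq[OF n(2)] by auto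
      then show "y \<in> (\<lambda>i. (f ^^ i) x) ` {..<n}" using n(1) by simp
    qed
  qed (auto intro: funpow_in_orb)
  have inj: "inj_on (\<lambda>i. (f ^^ i) x) {..<n}"
  proof (rule linorder_inj_onI')
    fix i j assume "i \<in> {..<n}" "j \<in> {..<n}" "i < j"
    then show "(f ^^ i) x \<noteq> (f ^^ j) x"
      using min[of "j - i"] bij_betw_funpow_cancel[OF assms(2,3), of i j] by (auto simp: less_imp_diff_less)
  qed
  have "card (orb f x) = n" using im card_image[OF inj] by simp
  then show "card (orb f x) > 0" "(f ^^ card (orb f x)) x = x"
    "inj_on (\<lambda>i. (f ^^ i) x) {..<card (orb f x)}"
    "orb f x = (\<lambda>i. (f ^^ i) x) ` {..<card (orb f x)}" using n im inj by auto
qed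

lemma card_orb_filter:
  assumes "finite D" "bij_betw f D D" "x \<in> D"
  shows "card {y \<in> orb f x. P y} = card {i. i < card (orb f x) \<and> P ((f ^^ i) x)}"
proof -
  have "{y \<in> orb f x. P y} = (\<lambda>i. (f ^^ i) x) ` {i. i < card (orb f x) \<and> P ((f ^^ i) x)}"
    using orb_funpow_enum(4)[OF assms] by auto
  moreover have "inj_on (\<lambda>i. (f ^^ i) x) {i. i < card (orb f x) \<and> P ((f ^^ i) x)}"
    using orb_funpow_enum(3)[OF assms] by (rule inj_on_subset) auto
  ultimately show ?thesis by (simp add: card_image)
qed

definition equiv_closure :: "('a \<times> 'a) set \<Rightarrow> ('a \<times> 'a) set" where
  "equiv_closure R = (R \<union> R\<inverse>)\<^sup>*"

definition num_components :: "'a set \<Rightarrow> ('a \<times> 'a) set \<Rightarrow> nat" where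
  "num_components A R = card (A // equiv_closure R)"

lemma equiv_equiv_closure: "equiv UNIV (equiv_closure R)"
  unfolding equiv_closure_def
  by (intro equivI refl_rtrancl sym_rtrancl trans_rtrancl) (auto simp: sym_def)

lemma equiv_closure_refl [simp]: "(x, x) \<in> equiv_closure R"
  unfolding equiv_closure_def by simp

lemma equiv_closure_sym: "(x, y) \<in> equiv_closure R \<Longrightarrow> (y, x) \<in> equiv_closure R"
  using equiv_equiv_closure[of R] by (meson equivE symD)

lemma equiv_closure_trans:
  "(x, y) \<in> equiv_closure R \<Longrightarrow> (y, z) \<in> equiv_closure R \<Longrightarrow> (x, z) \<in> equiv_closure R"
  unfolding equiv_closure_def by (rule rtrancl_trans)

lemma r_into_equiv_closure: "(x, y) \<in> R \<Longrightarrow> (x, y) \<in> equiv_closure R"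
  unfolding equiv_closure_def by blast

lemma equiv_closure_mono: "R \<subseteq> R' \<Longrightarrow> equiv_closure R \<subseteq> equiv_closure R'"
  unfolding equiv_closure_def by (intro rtrancl_mono) blast

lemma equiv_closure_induct [consumes 1, case_names base step]:
  assumes "(a, b) \<in> equiv_closure R" "P a"
    and "\<And>u v. P u \<Longrightarrow> (u, v) \<in> R \<or> (v, u) \<in> R \<Longrightarrow> P v"
  shows "P b"
  using assms(1)[unfolded equiv_closure_def] by induction (use assms(2,3) in blast)+

lemma equiv_closure_closed:
  assumes "R \<subseteq> A \<times> A" "(a, b) \<in> equiv_closure R" "a \<in> A"
  shows "b \<in> A"
  using assms(2,3) by (induction rule: equiv_closure_induct) (use assms(1) in blast)+

lemma equiv_closure_Image_insert_edge_subset: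
  fixes R :: "('a \<times> 'a) set" and x y z :: 'a
  defines "X \<equiv> equiv_closure R `` {x}" and "Y \<equiv> equiv_closure R `` {y}"
  shows "equiv_closure (R \<union> {(x, y), (y, x)}) `` {z} \<subseteq>
    (if z \<in> X \<union> Y then X \<union> Y else equiv_closure R `` {z})"
    (is "?E' `` {z} \<subseteq> ?T")
proof -
  have class_closed: "v \<in> ?T" if "u \<in> ?T" "(u, v) \<in> equiv_closure R" for u v
  proof -
    have "(a, v) \<in> equiv_closure R" if "(a, u) \<in> equiv_closure R" for a
      using equiv_closure_trans[OF that \<open>(u, v) \<in> equiv_closure R\<close>] .
    then show ?thesis using that(1) unfolding X_def Y_def by (auto split: if_splits)
  qed
  show ?thesis
  proof
    fix w assume "w \<in> ?E' `` {z}"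
    then have "(z, w) \<in> ?E'" by simp
    then show "w \<in> ?T"
    proof (induction rule: equiv_closure_induct)
      case base
      show ?case using equiv_closure_refl by (simp add: X_def Y_def)
    next
      case (step u v)
      consider "(u, v) \<in> R \<or> (v, u) \<in> R" | "{u, v} = {x, y}"
        using step.hyps by blast
      then show ?case
      proof cases
        case 1
        then show ?thesis
          using class_closed[OF step.IH] r_into_equiv_closure equiv_closure_sym by meson
      next
        case 2
        then have uv: "u \<in> {x, y}" "v \<in> {x, y}" by auto
        show ?thesis
        proof (cases "z \<in> X \<union> Y")
          case True
          then show ?thesis using uv by (auto simp: X_def Y_def)
        next
          case False
          then have "(z, u) \<in> equiv_closure R" using step.IH by simp
          then have "(u, z) \<in> equiv_closure R" by (rule equiv_closure_sym)
          then have "z \<in> X \<union> Y" using uv unfolding X_def Y_def by auto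
          with False show ?thesis by simp
        qed
      qed
    qed
  qed
qed

lemma equiv_closure_Image_insert_edge:
  fixes R :: "('a \<times> 'a) set" and x y z :: 'a
  defines "X \<equiv> equiv_closure R `` {x}" and "Y \<equiv> equiv_closure R `` {y}"
  shows "equiv_closure (R \<union> {(x, y), (y, x)}) `` {z} =
    (if z \<in> X \<union> Y then X \<union> Y else equiv_closure R `` {z})"
    (is "?E' `` {z} = ?T")
proof
  show "?E' `` {z} \<subseteq> ?T"
    unfolding X_def Y_def by (rule equiv_closure_Image_insert_edge_subset)
  have sub: "equiv_closure R \<subseteq> ?E'" by (rule equiv_closure_mono) blast
  have xy: "(x, y) \<in> ?E'" by (rule r_into_equiv_closure) blast
  show "?T \<subseteq> ?E' `` {z}"
  proof (cases "z \<in> X \<union> Y")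
    case True
    have "(x, z) \<in> ?E' \<or> (y, z) \<in> ?E'"
      using True sub unfolding X_def Y_def by auto
    then have zx: "(z, x) \<in> ?E'"
      using xy by (meson equiv_closure_sym equiv_closure_trans)
    have zy: "(z, y) \<in> ?E'" using equiv_closure_trans[OF zx xy] .
    have "(z, w) \<in> ?E'" if "w \<in> X \<union> Y" for w
    proof -
      have "(x, w) \<in> ?E' \<or> (y, w) \<in> ?E'"
        using that sub unfolding X_def Y_def by auto
      then show ?thesis using zx zy by (meson equiv_closure_trans)
    qed
    then show ?thesis using True by auto
  qed (use sub in auto)
qed

lemma equiv_closure_Image_eq_iff:
  "equiv_closure R `` {u} = equiv_closure R `` {v} \<longleftrightarrow> (u, v) \<in> equiv_closure R"
  by (rule eq_equiv_class_iff[OF equiv_equiv_closure UNIV_I UNIV_I])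

lemma quotient_insert_edge_connected:
  assumes "(x, y) \<in> equiv_closure R"
  shows "A // equiv_closure (R \<union> {(x, y), (y, x)}) = A // equiv_closure R"
proof -
  have "equiv_closure (R \<union> {(x, y), (y, x)}) `` {z} = equiv_closure R `` {z}" for z
  proof (cases "z \<in> equiv_closure R `` {x}")
    case True
    then have "equiv_closure R `` {y} = equiv_closure R `` {x}"
      "equiv_closure R `` {z} = equiv_closure R `` {x}"
      using assms equiv_closure_Image_eq_iff[of R x] by auto
    then show ?thesis using True equiv_closure_Image_insert_edge[of R x y z] by simp
  next
    case False
    moreover have "equiv_closure R `` {y} = equiv_closure R `` {x}"
      using equiv_closure_Image_eq_iff[of R y x] equiv_closure_sym[OF assms] by blast
    ultimately show ?thesis using equiv_closure_Image_insert_edge[of R x y z] by simp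
  qed
  then show ?thesis unfolding quotient_def by simp
qed

lemma quotient_insert_edge_disconnected:
  fixes R :: "('a \<times> 'a) set" and x y :: 'a
  defines "X \<equiv> equiv_closure R `` {x}" and "Y \<equiv> equiv_closure R `` {y}"
  assumes "x \<in> A" "y \<in> A"
  shows "A // equiv_closure (R \<union> {(x, y), (y, x)}) = insert (X \<union> Y) (A // equiv_closure R - {X, Y})"
proof -
  define merge where "merge z = (if z \<in> X \<union> Y then X \<union> Y else equiv_closure R `` {z})" for z
  have self: "z \<in> equiv_closure R `` {z}" for z by simp
  have X_class: "equiv_closure R `` {z} = X" if "z \<in> X" for z
    using that equiv_closure_Image_eq_iff[of R x z] unfolding X_def by simp
  have Y_class: "equiv_closure R `` {z} = Y" if "z \<in> Y" for z
    using that equiv_closure_Image_eq_iff[of R y z] unfolding Y_def by simp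
  have "A // equiv_closure (R \<union> {(x, y), (y, x)}) = merge ` A"
    unfolding quotient_def merge_def X_def Y_def equiv_closure_Image_insert_edge by auto
  also have "\<dots> = insert (X \<union> Y) (A // equiv_closure R - {X, Y})"
  proof
    show "merge ` A \<subseteq> insert (X \<union> Y) (A // equiv_closure R - {X, Y})"
    proof
      fix W assume "W \<in> merge ` A"
      then obtain z where z: "z \<in> A" "W = merge z" by blast
      show "W \<in> insert (X \<union> Y) (A // equiv_closure R - {X, Y})"
      proof (cases "z \<in> X \<union> Y")
        case False
        then have "W = equiv_closure R `` {z}" "z \<in> W" using z self unfolding merge_def by auto
        then show ?thesis using False z(1) by (auto intro: quotientI)
      qed (use z in \<open>simp add: merge_def\<close>)
    qed
    have "merge x = X \<union> Y" unfolding merge_def X_def using self by simp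
    moreover have "W \<in> merge ` A" if W: "W \<in> A // equiv_closure R" "W \<noteq> X" "W \<noteq> Y" for W
    proof -
      obtain z where z: "z \<in> A" "W = equiv_closure R `` {z}" using W(1) by (auto elim: quotientE)
      then have "z \<notin> X \<union> Y" using W X_class Y_class by blast
      then have "merge z = W" unfolding merge_def z by simp
      then show ?thesis using z(1) by blast
    qed
    ultimately show "insert (X \<union> Y) (A // equiv_closure R - {X, Y}) \<subseteq> merge ` A"
      using assms(3) by blast
  qed
  finally show ?thesis .
qed

lemma num_components_insert_edge:
  assumes "finite A" "x \<in> A" "y \<in> A"
  shows "num_components A (R \<union> {(x, y), (y, x)})
      + (if (x, y) \<in> equiv_closure R then 0 else 1) = num_components A R"
proof (cases "(x, y) \<in> equiv_closure R")
  case True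
  then show ?thesis unfolding num_components_def quotient_insert_edge_connected[OF True] by simp
next
  case False
  define X where "X = equiv_closure R `` {x}"
  define Y where "Y = equiv_closure R `` {y}"
  have XY: "X \<noteq> Y" using False equiv_closure_Image_eq_iff[of R x y] unfolding X_def Y_def by blast
  have XYQ: "X \<in> A // equiv_closure R" "Y \<in> A // equiv_closure R"
    unfolding X_def Y_def using assms(2,3) by (auto intro: quotientI)
  have "X \<union> Y \<notin> A // equiv_closure R"
  proof
    assume "X \<union> Y \<in> A // equiv_closure R"
    then obtain z where z: "equiv_closure R `` {z} = X \<union> Y" by (auto elim: quotientE)
    have "x \<in> X" "y \<in> Y" unfolding X_def Y_def by simp_all
    then have "(z, x) \<in> equiv_closure R" "(z, y) \<in> equiv_closure R" using z by auto
    then have "X = Y"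
      using equiv_closure_Image_eq_iff[of R z x] equiv_closure_Image_eq_iff[of R z y]
      unfolding X_def Y_def by simp
    then show False using XY by simp
  qed
  moreover have "finite (A // equiv_closure R)" unfolding quotient_def using assms(1) by simp
  moreover have "card {X, Y} \<le> card (A // equiv_closure R)"
    using XYQ \<open>finite (A // equiv_closure R)\<close> by (intro card_mono) auto
  ultimately show ?thesis
    using False XY XYQ quotient_insert_edge_disconnected[OF assms(2,3)]
    unfolding num_components_def X_def Y_def by (simp add: card_Diff_subset)
qed

lemma equiv_closure_orbit:
  assumes "finite D" "bij_betw f D D" "x \<in> D"
  shows "equiv_closure {(y, f y) | y. y \<in> D} `` {x} = orb f x"
proof
  show "equiv_closure {(y, f y) | y. y \<in> D} `` {x} \<subseteq> orb f x"
  proof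
    fix z assume "z \<in> equiv_closure {(y, f y) | y. y \<in> D} `` {x}"
    then have "(x, z) \<in> equiv_closure {(y, f y) | y. y \<in> D}" by simp
    then show "z \<in> orb f x"
    proof (induction rule: equiv_closure_induct)
      case (step u v)
      from step.hyps consider "v = f u" | "v \<in> D" "u = f v" by blast
      then show ?case
      proof cases
        case 1
        then show ?thesis using orb_closed[OF step.IH] by simp
      next
        case 2
        then have "v \<in> orb f u" using orb_sym[OF assms(1,2)] orb_closed self_in_orb by metis
        then show ?thesis using orb_trans[OF step.IH] by simp
      qed
    qed (rule self_in_orb)
  qed
  show "orb f x \<subseteq> equiv_closure {(y, f y) | y. y \<in> D} `` {x}"
  proof
    fix z assume "z \<in> orb f x"
    then obtain n where z: "z = (f ^^ n) x" unfolding orb_def by auto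
    have "(x, (f ^^ n) x) \<in> equiv_closure {(y, f y) | y. y \<in> D}"
    proof (induction n)
      case (Suc n)
      have "((f ^^ n) x, (f ^^ Suc n) x) \<in> {(y, f y) | y. y \<in> D}"
        using bij_betw_funpow_in[OF assms(2,3)] by simp
      then show ?case using Suc.IH by (meson equiv_closure_trans r_into_equiv_closure)
    qed simp
    then show "z \<in> equiv_closure {(y, f y) | y. y \<in> D} `` {x}" using z by simp
  qed
qed

section \<open>Combinatorial maps and a discrete Jordan curve theorem\<close>

locale comb_map =
  fixes D :: "'d set" and alpha sigma :: "'d \<Rightarrow> 'd"
  assumes finite_darts: "finite D"
    and bij_alpha: "bij_betw alpha D D" and bij_sigma: "bij_betw sigma D D"
    and alpha_alpha: "\<And>d. d \<in> D \<Longrightarrow> alpha (alpha d) = d"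
    and alpha_neq: "\<And>d. d \<in> D \<Longrightarrow> alpha d \<noteq> d"
    and connected: "\<And>d e. d \<in> D \<Longrightarrow> e \<in> D \<Longrightarrow>
       (d, e) \<in> ({(x, alpha x) | x. x \<in> D} \<union> {(x, sigma x) | x. x \<in> D})\<^sup>*"
begin

abbreviation phi :: "'d \<Rightarrow> 'd" where "phi \<equiv> fphi alpha sigma"

lemma phi_apply: "phi x = sigma (alpha x)"
  by (simp add: fphi_def)

lemma alpha_in: "x \<in> D \<Longrightarrow> alpha x \<in> D"
  using bij_alpha bij_betwE by blast

lemma sigma_in: "x \<in> D \<Longrightarrow> sigma x \<in> D"
  using bij_sigma bij_betwE by blast

lemma phi_in: "x \<in> D \<Longrightarrow> phi x \<in> D"
  by (simp add: phi_apply alpha_in sigma_in)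

lemma bij_phi: "bij_betw phi D D"
  unfolding fphi_def using bij_alpha bij_sigma by (rule bij_betw_trans)

lemma phi_alpha: "x \<in> D \<Longrightarrow> phi (alpha x) = sigma x"
  by (simp add: phi_apply alpha_alpha)

text \<open>The classes of \<open>primal_rel S\<close> are the connected components of the subgraph formed by
  the edges in \<open>S\<close>, those of \<open>dual_rel S\<close> the connected components of the dual graph
  after deleting the duals of the edges in \<open>S\<close>.\<close>

definition primal_rel :: "'d set \<Rightarrow> ('d \<times> 'd) set" where
  "primal_rel S = {(x, sigma x) | x. x \<in> D} \<union> {(x, alpha x) | x. x \<in> S}"

definition dual_rel :: "'d set \<Rightarrow> ('d \<times> 'd) set" where
  "dual_rel S = {(x, phi x) | x. x \<in> D} \<union> {(x, alpha x) | x. x \<in> D - S}"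

definition alpha_closed :: "'d set \<Rightarrow> bool" where
  "alpha_closed S \<longleftrightarrow> S \<subseteq> D \<and> (\<forall>x\<in>S. alpha x \<in> S)"

lemma primal_rel_subset: "S \<subseteq> D \<Longrightarrow> primal_rel S \<subseteq> D \<times> D"
  unfolding primal_rel_def using alpha_in sigma_in by blast

lemma dual_rel_subset: "dual_rel S \<subseteq> D \<times> D"
  unfolding dual_rel_def using alpha_in phi_in by blast

lemma primal_rel_insert_edge:
  "e \<in> D \<Longrightarrow> primal_rel (S \<union> {e, alpha e}) = primal_rel S \<union> {(e, alpha e), (alpha e, e)}"
  unfolding primal_rel_def using alpha_alpha by auto

lemma dual_rel_insert_edge:
  "e \<in> D \<Longrightarrow> alpha e \<notin> S \<Longrightarrow> e \<notin> S \<Longrightarrow>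
    dual_rel S = dual_rel (S \<union> {e, alpha e}) \<union> {(e, alpha e), (alpha e, e)}"
  unfolding dual_rel_def using alpha_alpha alpha_in by auto

lemma alpha_closed_insert_edge:
  "alpha_closed S \<Longrightarrow> e \<in> D \<Longrightarrow> alpha_closed (S \<union> {e, alpha e})"
  unfolding alpha_closed_def using alpha_alpha alpha_in by auto

lemma alpha_closed_remove_edge:
  assumes "alpha_closed S" "e \<in> D" shows "alpha_closed (S - {e, alpha e})"
proof -
  have "alpha x \<in> S - {e, alpha e}" if x: "x \<in> S" "x \<noteq> e" "x \<noteq> alpha e" for x
  proof -
    have "x \<in> D" "alpha x \<in> S" using x(1) assms(1) unfolding alpha_closed_def by auto
    then show ?thesis using x(2,3) alpha_alpha[of x] alpha_alpha[OF assms(2)] by auto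
  qed
  then show ?thesis using assms(1) unfolding alpha_closed_def by blast
qed

lemma alpha_closed_alpha_notin: "alpha_closed S \<Longrightarrow> e \<in> D \<Longrightarrow> e \<notin> S \<Longrightarrow> alpha e \<notin> S"
  unfolding alpha_closed_def using alpha_alpha by metis

lemma dual_rel_phi: "x \<in> D \<Longrightarrow> (x, phi x) \<in> equiv_closure (dual_rel S)"
  by (rule r_into_equiv_closure) (auto simp: dual_rel_def)

lemma dual_rel_alpha: "x \<in> D \<Longrightarrow> x \<notin> S \<Longrightarrow> (x, alpha x) \<in> equiv_closure (dual_rel S)"
  by (rule r_into_equiv_closure) (auto simp: dual_rel_def)

lemma dual_rel_alpha_sigma: "x \<in> D \<Longrightarrow> (alpha x, sigma x) \<in> equiv_closure (dual_rel S)"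
  using dual_rel_phi[OF alpha_in] phi_alpha by metis

lemma dual_rel_sigma:
  "x \<in> D \<Longrightarrow> x \<notin> S \<Longrightarrow> (x, sigma x) \<in> equiv_closure (dual_rel S)"
  using dual_rel_alpha dual_rel_alpha_sigma equiv_closure_trans by metis

lemma primal_rel_sigma: "x \<in> D \<Longrightarrow> (x, sigma x) \<in> equiv_closure (primal_rel S)"
  by (rule r_into_equiv_closure) (auto simp: primal_rel_def)

lemma primal_rel_alpha: "x \<in> S \<Longrightarrow> (x, alpha x) \<in> equiv_closure (primal_rel S)"
  by (rule r_into_equiv_closure) (auto simp: primal_rel_def)

definition boundary_step :: "'d set \<Rightarrow> 'd \<Rightarrow> 'd" where
  "boundary_step S z = (if z \<in> S then sigma (alpha z) else sigma z)"

lemma inj_on_boundary_step: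
  assumes S: "alpha_closed S" shows "inj_on (boundary_step S) D"
proof (rule inj_onI)
  define g where "g z = (if z \<in> S then alpha z else z)" for z
  have g_g: "g (g z) = z" if "z \<in> D" for z
    unfolding g_def using that S alpha_alpha unfolding alpha_closed_def by simp
  fix x y assume xy: "x \<in> D" "y \<in> D" "boundary_step S x = boundary_step S y"
  have "sigma (g x) = sigma (g y)" "g x \<in> D" "g y \<in> D"
    using xy alpha_in unfolding boundary_step_def g_def by (auto split: if_splits)
  then have "g x = g y" using bij_betw_imp_inj_on[OF bij_sigma] by (auto dest: inj_onD)
  then show "x = y" using g_g xy(1,2) by metis
qed

lemma boundary_step_primal_rel:
  "z \<in> D \<Longrightarrow> (z, boundary_step S z) \<in> equiv_closure (primal_rel S)"
  unfolding boundary_step_def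
  using equiv_closure_trans[OF primal_rel_alpha primal_rel_sigma[OF alpha_in]] primal_rel_sigma
  by (auto simp: alpha_in)

lemma boundary_step_dual_rel:
  "z \<in> D \<Longrightarrow> z \<in> S \<or> z \<notin> S' \<Longrightarrow> (z, boundary_step S z) \<in> equiv_closure (dual_rel S')"
  unfolding boundary_step_def using dual_rel_phi dual_rel_sigma by (auto simp: phi_apply)

text \<open>The walk from \<open>sigma e = boundary_step S e\<close> along \<open>boundary_step S\<close> stays in the primal
  class \<open>Z\<close> of \<open>e\<close> and returns to \<open>e\<close>, since \<open>boundary_step S\<close> permutes the finite set \<open>Z\<close>.
  It stays in one dual class until then, as it avoids \<open>alpha e \<notin> Z\<close>.\<close>

lemma sides_connected_if_ends_disconnected:
  assumes S: "alpha_closed S" and e: "e \<in> D" "e \<notin> S"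
    and ends: "(e, alpha e) \<notin> equiv_closure (primal_rel S)"
  shows "(e, alpha e) \<in> equiv_closure (dual_rel (S \<union> {e, alpha e}))"
proof (rule ccontr)
  define E where "E = equiv_closure (dual_rel (S \<union> {e, alpha e}))"
  define Z where "Z = equiv_closure (primal_rel S) `` {e}"
  define W where "W = {x \<in> Z. (sigma e, x) \<in> E}"
  assume sides: "(e, alpha e) \<notin> E"
  have ZD: "Z \<subseteq> D"
    using S equiv_closure_closed[OF primal_rel_subset _ e(1)] unfolding Z_def alpha_closed_def by blast
  have step_Z: "boundary_step S z \<in> Z" if "z \<in> Z" for z
    using equiv_closure_trans[OF _ boundary_step_primal_rel] that ZD unfolding Z_def by blast
  have not_e: "(sigma e, e) \<notin> E"
  proof
    assume "(sigma e, e) \<in> E"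
    then have "(alpha e, e) \<in> E"
      using equiv_closure_trans[OF dual_rel_alpha_sigma[OF e(1)]] unfolding E_def by blast
    then show False using sides equiv_closure_sym[of "alpha e" e] unfolding E_def by blast
  qed
  have "boundary_step S ` W \<subseteq> W"
  proof
    fix y assume "y \<in> boundary_step S ` W"
    then obtain x where x: "x \<in> Z" "(sigma e, x) \<in> E" "y = boundary_step S x"
      unfolding W_def by blast
    have "x \<noteq> e" "x \<noteq> alpha e" using x not_e ends unfolding Z_def by auto
    then have "(x, y) \<in> E"
      using boundary_step_dual_rel[of x S "S \<union> {e, alpha e}"] x(1,3) ZD unfolding E_def by blast
    then have "(sigma e, y) \<in> E"
      unfolding E_def by (rule equiv_closure_trans[OF x(2)[unfolded E_def]])
    then show "y \<in> W" using step_Z[OF x(1)] x(3) unfolding W_def by blast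
  qed
  moreover have W_D: "W \<subseteq> D" using ZD unfolding W_def by blast
  ultimately have "boundary_step S ` W = W"
    using finite_subset[OF W_D finite_darts] inj_on_subset[OF inj_on_boundary_step[OF S] W_D]
    by (intro endo_inj_surj)
  moreover have "boundary_step S e \<in> W"
    using step_Z[of e] e(2) unfolding W_def Z_def E_def boundary_step_def by simp
  ultimately obtain w where "w \<in> W" "boundary_step S w = boundary_step S e" by (metis imageE)
  then have "w = e" using inj_on_boundary_step[OF S] W_D e(1) by (auto dest: inj_onD)
  then show False using \<open>w \<in> W\<close> not_e unfolding W_def by blast
qed

lemma even_card_alpha_closed: "alpha_closed S \<Longrightarrow> even (card S)"
proof (induction "card S" arbitrary: S rule: less_induct)
  case less
  show ?case
  proof (cases "S = {}")
    case False
    then obtain e where e: "e \<in> S" by blast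
    have SD: "S \<subseteq> D" and eD: "e \<in> D" and ae: "alpha e \<in> S"
      using less.prems e unfolding alpha_closed_def by auto
    define S' where "S' = S - {e, alpha e}"
    have "alpha x \<in> S'" if "x \<in> S'" for x
    proof -
      have "x \<in> S" "x \<noteq> e" "x \<noteq> alpha e" "x \<in> D" using that SD unfolding S'_def by auto
      then show ?thesis
        using less.prems alpha_alpha[of x] alpha_alpha[OF eD] unfolding S'_def alpha_closed_def
        by (metis Diff_iff insertE singletonD)
    qed
    then have "alpha_closed S'"
      using SD unfolding S'_def alpha_closed_def by auto
    moreover have "card S = card S' + 2"
    proof -
      have "finite S" using finite_subset[OF SD finite_darts] .
      moreover have "card {e, alpha e} \<le> card S" using e ae \<open>finite S\<close> by (intro card_mono) auto
      ultimately show ?thesis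
        using e ae alpha_neq[OF eD] unfolding S'_def by (simp add: card_Diff_subset)
    qed
    ultimately show ?thesis using less.hyps by simp
  qed simp
qed

text \<open>By \<open>sides_connected_if_ends_disconnected\<close>, adding an edge changes at most one of the two
  component counts, so \<open>potential\<close> never decreases. Euler's formula makes it equal at \<open>{}\<close> and
  \<open>D\<close>, so no single edge may leave both counts unchanged.\<close>

definition potential :: "'d set \<Rightarrow> int" where
  "potential S = int (card S) + 2 * int (num_components D (primal_rel S))
     - 2 * int (num_components D (dual_rel S))"

lemma potential_insert_edge:
  assumes S: "alpha_closed S" and e: "e \<in> D" "e \<notin> S"
  shows "potential (S \<union> {e, alpha e}) = potential S + 2
     - 2 * (if (e, alpha e) \<in> equiv_closure (primal_rel S) then 0 else 1)
     - 2 * (if (e, alpha e) \<in> equiv_closure (dual_rel (S \<union> {e, alpha e})) then 0 else 1)"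
proof -
  have SD: "S \<subseteq> D" using S unfolding alpha_closed_def by blast
  have ae: "alpha e \<notin> S" by (rule alpha_closed_alpha_notin[OF S e])
  have "card (S \<union> {e, alpha e}) = card S + 2"
    using ae e(2) alpha_neq[OF e(1)] finite_subset[OF SD finite_darts] by simp
  moreover have "num_components D (primal_rel (S \<union> {e, alpha e}))
      + (if (e, alpha e) \<in> equiv_closure (primal_rel S) then 0 else 1)
      = num_components D (primal_rel S)"
    unfolding primal_rel_insert_edge[OF e(1)]
    by (rule num_components_insert_edge[OF finite_darts e(1) alpha_in[OF e(1)]])
  moreover have "num_components D (dual_rel S)
      + (if (e, alpha e) \<in> equiv_closure (dual_rel (S \<union> {e, alpha e})) then 0 else 1)
      = num_components D (dual_rel (S \<union> {e, alpha e}))"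
    unfolding dual_rel_insert_edge[OF e(1) ae e(2)]
    by (rule num_components_insert_edge[OF finite_darts e(1) alpha_in[OF e(1)]])
  ultimately show ?thesis unfolding potential_def by (simp split: if_splits)
qed

lemma potential_mono:
  assumes "alpha_closed S" "alpha_closed T" "S \<subseteq> T"
  shows "potential S \<le> potential T"
  using assms
proof (induction "card (T - S)" arbitrary: S rule: less_induct)
  case less
  show ?case
  proof (cases "S = T")
    case False
    then obtain e where e: "e \<in> T" "e \<notin> S" using less.prems(3) by blast
    have TD: "T \<subseteq> D" and ae: "alpha e \<in> T" using less.prems(2) e unfolding alpha_closed_def by auto
    have eD: "e \<in> D" using e TD by blast
    define S' where "S' = S \<union> {e, alpha e}"
    have "card (T - S') < card (T - S)"
      using e ae finite_subset[OF TD finite_darts] unfolding S'_def by (intro psubset_card_mono) auto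
    moreover have "alpha_closed S'" "S' \<subseteq> T"
      unfolding S'_def using alpha_closed_insert_edge[OF less.prems(1) eD] less.prems(3) e ae by auto
    ultimately have "potential S' \<le> potential T" using less.hyps less.prems(2) by blast
    moreover have "potential S \<le> potential S'"
      using potential_insert_edge[OF less.prems(1) eD e(2)]
        sides_connected_if_ends_disconnected[OF less.prems(1) eD e(2)]
      unfolding S'_def by (simp split: if_splits)
    ultimately show ?thesis by simp
  qed simp
qed

lemma num_components_connected:
  assumes "R \<subseteq> D \<times> D" "D \<noteq> {}"
    and "\<And>x. x \<in> D \<Longrightarrow> (x, alpha x) \<in> equiv_closure R"
    and "\<And>x. x \<in> D \<Longrightarrow> (x, sigma x) \<in> equiv_closure R"
  shows "num_components D R = 1"
proof -
  have "(d, e) \<in> equiv_closure R" if "d \<in> D" "e \<in> D" for d e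
    using connected[OF that]
  proof (induction rule: rtrancl_induct)
    case (step y z)
    then have "(y, z) \<in> equiv_closure R" using assms(3,4) by blast
    then show ?case using equiv_closure_trans[OF step.IH] by blast
  qed simp
  then have "equiv_closure R `` {z} = D" if "z \<in> D" for z
    using equiv_closure_closed[OF assms(1) _ that] that by blast
  then have "D // equiv_closure R = {D}"
    using assms(2) unfolding quotient_def by auto
  then show ?thesis unfolding num_components_def by simp
qed

lemma num_components_orbits:
  assumes "bij_betw f D D"
  shows "num_components D {(y, f y) | y. y \<in> D} = card (orb f ` D)"
proof -
  have "D // equiv_closure {(y, f y) | y. y \<in> D} = orb f ` D"
    unfolding quotient_def equiv_closure_orbit[OF finite_darts assms] UNION_singleton_eq_range
    by (simp add: equiv_closure_orbit[OF finite_darts assms] cong: image_cong)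
  then show ?thesis unfolding num_components_def by simp
qed

lemma potential_empty: "D \<noteq> {} \<Longrightarrow> potential {} = 2 * int (card (orb sigma ` D)) - 2"
proof -
  assume "D \<noteq> {}"
  moreover have "primal_rel {} = {(y, sigma y) | y. y \<in> D}"
    unfolding primal_rel_def by auto
  moreover have "num_components D (dual_rel {}) = 1"
    using \<open>D \<noteq> {}\<close> dual_rel_subset dual_rel_alpha dual_rel_sigma
    by (intro num_components_connected) auto
  ultimately show ?thesis unfolding potential_def using num_components_orbits[OF bij_sigma] by simp
qed

lemma potential_all:
  "D \<noteq> {} \<Longrightarrow> potential D = int (card D) + 2 - 2 * int (card (orb phi ` D))"
proof -
  assume "D \<noteq> {}"
  moreover have "dual_rel D = {(y, phi y) | y. y \<in> D}"
    unfolding dual_rel_def by auto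
  moreover have "num_components D (primal_rel D) = 1"
    using \<open>D \<noteq> {}\<close> primal_rel_subset primal_rel_alpha primal_rel_sigma
    by (intro num_components_connected) auto
  ultimately show ?thesis unfolding potential_def using num_components_orbits[OF bij_phi] by simp
qed

lemma closing_edge_separates:
  assumes euler: "int (card (orb sigma ` D)) - int (card D div 2) + int (card (orb phi ` D)) = 2"
    and C: "alpha_closed C" and e: "e \<in> D" "e \<notin> C"
    and closing: "(e, alpha e) \<in> equiv_closure (primal_rel C)"
  shows "(e, alpha e) \<notin> equiv_closure (dual_rel (C \<union> {e, alpha e}))"
proof
  assume "(e, alpha e) \<in> equiv_closure (dual_rel (C \<union> {e, alpha e}))"
  then have "potential (C \<union> {e, alpha e}) = potential C + 2"
    using potential_insert_edge[OF C e] closing by simp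
  moreover have "alpha_closed {}" "alpha_closed D"
    unfolding alpha_closed_def using alpha_in by auto
  moreover have "alpha_closed (C \<union> {e, alpha e})" "C \<union> {e, alpha e} \<subseteq> D"
    using alpha_closed_insert_edge[OF C e(1)] unfolding alpha_closed_def by auto
  ultimately have "potential {} + 2 \<le> potential D"
    using potential_mono[of "{}" C] potential_mono[of "C \<union> {e, alpha e}" D] C by force
  moreover have "int (card D) = 2 * int (card D div 2)"
    using even_card_alpha_closed[OF \<open>alpha_closed D\<close>] by auto
  moreover have "D \<noteq> {}" using e(1) by blast
  ultimately show False using potential_empty potential_all euler by simp
qed

end

locale plane_map = comb_map D alpha sigma for D :: "'d set" and alpha sigma +
  fixes vert :: "'d \<Rightarrow> 'v"
  assumes vert_eq_iff_orb: "\<And>d e. d \<in> D \<Longrightarrow> e \<in> D \<Longrightarrow> vert d = vert e \<longleftrightarrow> e \<in> orb sigma d"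
    and euler: "int (card (vert ` D)) - int (card D div 2)
      + int (card {orb (fphi alpha sigma) d | d. d \<in> D}) = 2"
begin

lemma orb_sigma_vert:
  assumes "d \<in> D" shows "orb sigma d = {x \<in> D. vert x = vert d}"
proof (intro set_eqI iffI)
  fix x assume x: "x \<in> orb sigma d"
  then have "x \<in> D" using orb_subset[OF bij_sigma assms] by blast
  then show "x \<in> {x \<in> D. vert x = vert d}"
    using vert_eq_iff_orb[OF assms \<open>x \<in> D\<close>] x by simp
next
  fix x assume "x \<in> {x \<in> D. vert x = vert d}"
  then show "x \<in> orb sigma d" using vert_eq_iff_orb[OF assms, of x] by simp
qed

lemma vert_sigma: "x \<in> D \<Longrightarrow> vert (sigma x) = vert x"
  using vert_eq_iff_orb[OF _ sigma_in] orb_closed[OF self_in_orb] by metis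

lemma euler_orbits:
  "int (card (orb sigma ` D)) - int (card D div 2) + int (card (orb phi ` D)) = 2"
proof -
  have "orb sigma ` D = (\<lambda>v. {x \<in> D. vert x = v}) ` vert ` D"
    using orb_sigma_vert by (auto simp: image_iff)
  moreover have "inj_on (\<lambda>v. {x \<in> D. vert x = v}) (vert ` D)"
    by (rule inj_onI) blast
  ultimately have "card (orb sigma ` D) = card (vert ` D)" by (simp add: card_image)
  moreover have "{orb phi d | d. d \<in> D} = orb phi ` D" by blast
  ultimately show ?thesis using euler by simp
qed

lemma same_vertex_primal_rel:
  assumes "x \<in> D" "y \<in> D" "vert x = vert y"
  shows "(x, y) \<in> equiv_closure (primal_rel S)"
proof -
  have "y \<in> equiv_closure {(y, sigma y) | y. y \<in> D} `` {x}"
    unfolding equiv_closure_orbit[OF finite_darts bij_sigma assms(1)]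
    using vert_eq_iff_orb assms by blast
  moreover have "{(y, sigma y) | y. y \<in> D} \<subseteq> primal_rel S"
    unfolding primal_rel_def by blast
  ultimately show ?thesis using equiv_closure_mono by blast
qed

end

locale plane_cycle = plane_map D alpha sigma vert
  for D :: "'d set" and alpha sigma :: "'d \<Rightarrow> 'd" and vert :: "'d \<Rightarrow> 'v" +
  fixes cs :: "'d list" and d0 :: 'd
  assumes base_dart: "d0 \<in> D"
    and cycle_darts: "set cs \<subseteq> D"
    and cycle_length: "length cs \<ge> 3"
    and cycle_distinct: "distinct (map vert cs)"
    and cycle_closed: "\<And>i. i < length cs \<Longrightarrow> vert (alpha (cs ! i)) = vert (cs ! ((i + 1) mod length cs))"
begin

abbreviation len :: nat where "len \<equiv> length cs"

definition nxt :: "nat \<Rightarrow> nat" where "nxt i = Suc i mod len"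

definition cycle_edges :: "'d set" where "cycle_edges = set cs \<union> alpha ` set cs"

lemma cycle_dart_in: "i < len \<Longrightarrow> cs ! i \<in> D"
  using cycle_darts by auto

lemma first_cycle_dart_in: "cs ! 0 \<in> D"
  using cycle_length by (intro cycle_dart_in) linarith

lemma nxt_less: "i < len \<Longrightarrow> nxt i < len"
  unfolding nxt_def by (rule mod_less_divisor) auto

lemma nxt_Suc: "Suc i < len \<Longrightarrow> nxt i = Suc i"
  unfolding nxt_def by simp

lemma vert_alpha_cycle: "i < len \<Longrightarrow> vert (alpha (cs ! i)) = vert (cs ! nxt i)"
  using cycle_closed unfolding nxt_def by simp

lemma cycle_vert_inj: "i < len \<Longrightarrow> j < len \<Longrightarrow> vert (cs ! i) = vert (cs ! j) \<Longrightarrow> i = j"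
  using cycle_distinct by (auto simp: distinct_conv_nth)

lemma nxt_inj: "i < len \<Longrightarrow> j < len \<Longrightarrow> nxt i = nxt j \<Longrightarrow> i = j"
  unfolding nxt_def by (metis Suc_lessI mod_less mod_self nat.inject Zero_not_Suc)

lemma nxt_nxt_neq: "i < len \<Longrightarrow> nxt (nxt i) \<noteq> i"
  using cycle_length unfolding nxt_def
  by (cases "Suc i = len"; cases "Suc (Suc i) = len") auto

lemma alpha_cycle_dart_notin: "i < len \<Longrightarrow> alpha (cs ! i) \<notin> set cs"
proof
  assume i: "i < len" and "alpha (cs ! i) \<in> set cs"
  then obtain j where j: "j < len" "alpha (cs ! i) = cs ! j" by (auto simp: in_set_conv_nth)
  then have "nxt i = j"
    using cycle_vert_inj[OF nxt_less[OF i] j(1)] vert_alpha_cycle[OF i] by simp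
  moreover have "alpha (cs ! j) = cs ! i"
    using j alpha_alpha cycle_dart_in i by metis
  then have "nxt j = i"
    using cycle_vert_inj[OF nxt_less[OF j(1)] i] vert_alpha_cycle[OF j(1)] by simp
  ultimately show False using nxt_nxt_neq[OF i] by simp
qed

lemma alpha_closed_cycle_edges: "alpha_closed cycle_edges"
  unfolding alpha_closed_def cycle_edges_def
  using cycle_darts alpha_in alpha_alpha by (auto simp: image_iff)

lemma cycle_edges_at_vertex:
  assumes i: "i < len" and x: "x \<in> cycle_edges" "vert x = vert (cs ! nxt i)"
  shows "x = cs ! nxt i \<or> x = alpha (cs ! i)"
proof -
  from x(1) consider (dart) j where "j < len" "x = cs ! j"
    | (reverse) j where "j < len" "x = alpha (cs ! j)"
    unfolding cycle_edges_def by (auto simp: in_set_conv_nth)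
  then show ?thesis
  proof cases
    case dart
    then show ?thesis using cycle_vert_inj[of j "nxt i"] x(2) nxt_less[OF i] by simp
  next
    case reverse
    then have "nxt j = nxt i"
      using vert_alpha_cycle[of j] x(2) cycle_vert_inj nxt_less i by metis
    then show ?thesis using nxt_inj reverse i by blast
  qed
qed

abbreviation dual_conn :: "('d \<times> 'd) set" where
  "dual_conn \<equiv> equiv_closure (dual_rel cycle_edges)"

lemma dual_conn_around_vertex:
  assumes p: "p \<in> D" and q: "q \<in> D" "vert q = vert p" "p \<noteq> q"
    and only: "\<And>x. x \<in> D \<Longrightarrow> x \<in> cycle_edges \<Longrightarrow> vert x = vert p \<Longrightarrow> x = p \<or> x = q"
  shows "(sigma p, q) \<in> dual_conn"
proof (rule ccontr)
  assume not_q: "(sigma p, q) \<notin> dual_conn"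
  define W where "W = {x \<in> D. vert x = vert p \<and> (sigma p, x) \<in> dual_conn}"
  have "sigma x \<in> insert p W" if "x \<in> insert p W" for x
  proof (cases "x = p")
    case False
    then have x: "x \<in> D" "vert x = vert p" "(sigma p, x) \<in> dual_conn"
      using that unfolding W_def by auto
    then have "x \<notin> cycle_edges" using only[OF x(1) _ x(2)] False not_q by blast
    then have "(sigma p, sigma x) \<in> dual_conn"
      using equiv_closure_trans[OF x(3) dual_rel_sigma[OF x(1)]] by blast
    then show ?thesis using x sigma_in vert_sigma unfolding W_def by simp
  qed (use p sigma_in vert_sigma in \<open>simp add: W_def\<close>)
  then have "(sigma ^^ n) p \<in> insert p W" for n
    by (induction n) auto
  then have "q \<in> insert p W"
    using vert_eq_iff_orb[OF p q(1)] q(2) unfolding orb_def by auto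
  then show False using q(3) not_q unfolding W_def by blast
qed

lemma cycle_side_step:
  assumes i: "i < len"
  shows "(cs ! i, cs ! nxt i) \<in> dual_conn" "(alpha (cs ! i), alpha (cs ! nxt i)) \<in> dual_conn"
proof -
  let ?c = "cs ! i" and ?c' = "cs ! nxt i"
  have c: "?c \<in> D" "alpha ?c \<in> D" "?c' \<in> D"
    using cycle_dart_in[OF i] cycle_dart_in[OF nxt_less[OF i]] alpha_in by auto
  have v: "vert ?c' = vert (alpha ?c)" using vert_alpha_cycle[OF i] by simp
  have ne: "alpha ?c \<noteq> ?c'"
    using alpha_cycle_dart_notin[OF i] nxt_less[OF i] by (metis nth_mem)
  have only: "x = alpha ?c \<or> x = ?c'" if "x \<in> cycle_edges" "vert x = vert (alpha ?c)" for x
    using cycle_edges_at_vertex[OF i that(1)] that(2) v by auto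
  have "(?c, sigma (alpha ?c)) \<in> dual_conn" using dual_rel_phi[OF c(1)] by (simp add: phi_apply)
  moreover have "(sigma (alpha ?c), ?c') \<in> dual_conn"
    using dual_conn_around_vertex[OF c(2,3) v ne] only by blast
  ultimately show "(?c, ?c') \<in> dual_conn" by (rule equiv_closure_trans)
  have "(sigma ?c', alpha ?c) \<in> dual_conn"
    using dual_conn_around_vertex[OF c(3,2) v[symmetric] ne[symmetric]] only v by auto
  then have "(alpha ?c', alpha ?c) \<in> dual_conn"
    by (rule equiv_closure_trans[OF dual_rel_alpha_sigma[OF c(3)]])
  then show "(alpha ?c, alpha ?c') \<in> dual_conn" by (rule equiv_closure_sym)
qed

lemma cycle_sides_connected:
  "i < len \<Longrightarrow> (cs ! 0, cs ! i) \<in> dual_conn \<and> (alpha (cs ! 0), alpha (cs ! i)) \<in> dual_conn"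
proof (induction i)
  case (Suc i)
  then have i: "i < len" and "nxt i = Suc i" using nxt_Suc by auto
  then show ?case
    using equiv_closure_trans[OF conjunct1[OF Suc.IH[OF i]] cycle_side_step(1)[OF i]]
      equiv_closure_trans[OF conjunct2[OF Suc.IH[OF i]] cycle_side_step(2)[OF i]] by simp
qed simp

lemma cycle_path_primal_rel:
  assumes "\<And>i. i < j \<Longrightarrow> cs ! i \<in> S" "j < len"
  shows "(cs ! 0, cs ! j) \<in> equiv_closure (primal_rel S)"
  using assms
proof (induction j)
  case (Suc j)
  then have j: "j < len" "nxt j = Suc j" using nxt_Suc by auto
  have "(cs ! 0, cs ! j) \<in> equiv_closure (primal_rel S)"
    using Suc by simp
  moreover have "(cs ! j, alpha (cs ! j)) \<in> equiv_closure (primal_rel S)"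
    using Suc.prems(1) by (intro primal_rel_alpha) simp
  moreover have "(alpha (cs ! j), cs ! Suc j) \<in> equiv_closure (primal_rel S)"
    using same_vertex_primal_rel alpha_in cycle_dart_in Suc.prems(2) j vert_alpha_cycle[OF j(1)]
    by simp
  ultimately show ?case by (blast intro: equiv_closure_trans[OF equiv_closure_trans])
qed simp

lemma last_cycle_edge_closes:
  defines "e \<equiv> cs ! (len - 1)"
  shows "(e, alpha e) \<in> equiv_closure (primal_rel (cycle_edges - {e, alpha e}))"
proof -
  define m where "m = len - 1"
  have "Suc m = len" unfolding m_def using cycle_length by simp
  then have m: "m < len" "nxt m = 0" unfolding nxt_def by auto
  have "cs ! j \<in> cycle_edges - {e, alpha e}" if "j < m" for j
  proof -
    have "cs ! j \<noteq> e"
      using that m(1) cycle_distinct unfolding e_def m_def[symmetric]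
      by (simp add: nth_eq_iff_index_eq distinct_map)
    moreover have "cs ! j \<noteq> alpha e"
      using alpha_cycle_dart_notin[OF m(1)] nth_mem[of j cs] that m(1) unfolding e_def m_def[symmetric]
      by (metis order.strict_trans)
    ultimately show ?thesis using that m(1) unfolding cycle_edges_def by simp
  qed
  then have "(cs ! 0, e) \<in> equiv_closure (primal_rel (cycle_edges - {e, alpha e}))"
    unfolding e_def m_def[symmetric] using m(1) by (rule cycle_path_primal_rel)
  moreover have "(cs ! 0, alpha e) \<in> equiv_closure (primal_rel (cycle_edges - {e, alpha e}))"
    using same_vertex_primal_rel alpha_in cycle_dart_in first_cycle_dart_in m vert_alpha_cycle[OF m(1)]
    unfolding e_def m_def[symmetric] by (simp add: equiv_closure_sym)
  ultimately show ?thesis by (rule equiv_closure_trans[OF equiv_closure_sym])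
qed

lemma cycle_sides_separated: "(cs ! 0, alpha (cs ! 0)) \<notin> dual_conn"
proof
  assume sides: "(cs ! 0, alpha (cs ! 0)) \<in> dual_conn"
  define e where "e = cs ! (len - 1)"
  have last: "len - 1 < len" using cycle_length by simp
  have e: "e \<in> D" "e \<notin> cycle_edges - {e, alpha e}" unfolding e_def using cycle_dart_in[OF last] by auto
  have "cycle_edges = (cycle_edges - {e, alpha e}) \<union> {e, alpha e}"
    unfolding e_def cycle_edges_def using last by auto
  then have "(e, alpha e) \<notin> dual_conn"
    using closing_edge_separates[OF euler_orbits alpha_closed_remove_edge[OF alpha_closed_cycle_edges e(1)] e]
      last_cycle_edge_closes unfolding e_def by simp
  moreover have "(e, cs ! 0) \<in> dual_conn" "(alpha (cs ! 0), alpha e) \<in> dual_conn"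
    using cycle_sides_connected[OF last] equiv_closure_sym unfolding e_def by auto
  then have "(e, alpha e) \<in> dual_conn"
    using equiv_closure_trans[OF equiv_closure_trans[OF _ sides]] by blast
  ultimately show False by blast
qed

lemma dual_conn_cover:
  assumes "x \<in> D"
  shows "(cs ! 0, x) \<in> dual_conn \<or> (alpha (cs ! 0), x) \<in> dual_conn"
proof -
  let ?P = "\<lambda>y. (cs ! 0, y) \<in> dual_conn \<or> (alpha (cs ! 0), y) \<in> dual_conn"
  have P_alpha: "?P (alpha y)" if "y \<in> D" "?P y" for y
  proof (cases "y \<in> cycle_edges")
    case True
    then consider i where "i < len" "y = cs ! i" | i where "i < len" "y = alpha (cs ! i)"
      unfolding cycle_edges_def by (auto simp: in_set_conv_nth)
    then show ?thesis
      using cycle_sides_connected alpha_alpha cycle_dart_in by cases auto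
  next
    case False
    then show ?thesis
      using that(2) equiv_closure_trans[OF _ dual_rel_alpha[OF that(1) False]] by blast
  qed
  have P_sigma: "?P (sigma y)" if "y \<in> D" "?P y" for y
    using P_alpha[OF that] equiv_closure_trans[OF _ dual_rel_alpha_sigma[OF that(1)]] by blast
  have "?P x \<and> x \<in> D"
    using connected[OF first_cycle_dart_in assms]
  proof (induction rule: rtrancl_induct)
    case (step y z)
    then show ?case
      using P_alpha P_sigma alpha_in sigma_in by blast
  qed (use first_cycle_dart_in in simp)
  then show ?thesis by blast
qed

lemma not_cycle_edge_iff:
  assumes "x \<in> D" shows "x \<notin> cycle_edges \<longleftrightarrow> x \<notin> set cs \<and> alpha x \<notin> set cs"
proof -
  have "x \<in> alpha ` set cs \<longleftrightarrow> alpha x \<in> set cs"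
  proof
    assume "x \<in> alpha ` set cs"
    then show "alpha x \<in> set cs" using alpha_alpha cycle_darts by auto
  next
    assume "alpha x \<in> set cs"
    then show "x \<in> alpha ` set cs" using alpha_alpha[OF assms] by (metis image_eqI)
  qed
  then show ?thesis unfolding cycle_edges_def by blast
qed

lemma dual_step_avoiding_iff:
  "(a, b) \<in> dual_step_avoiding D alpha sigma cs \<longleftrightarrow>
    a \<in> D \<and> (b \<in> orb phi a \<or> a \<notin> cycle_edges \<and> b = alpha a)"
  unfolding dual_step_avoiding_def using not_cycle_edge_iff by auto

lemma dual_conn_orb_phi:
  assumes "a \<in> D" "b \<in> orb phi a"
  shows "(a, b) \<in> dual_conn"
proof -
  have "b \<in> equiv_closure {(y, phi y) | y. y \<in> D} `` {a}"
    unfolding equiv_closure_orbit[OF finite_darts bij_phi assms(1)] by (rule assms(2))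
  moreover have "{(y, phi y) | y. y \<in> D} \<subseteq> dual_rel cycle_edges"
    unfolding dual_rel_def by blast
  ultimately show ?thesis using equiv_closure_mono by blast
qed

lemma dual_step_avoiding_in_dual_conn:
  assumes "(a, b) \<in> dual_step_avoiding D alpha sigma cs"
  shows "(a, b) \<in> dual_conn"
proof -
  have a: "a \<in> D" and "b \<in> orb phi a \<or> a \<notin> cycle_edges \<and> b = alpha a"
    using assms unfolding dual_step_avoiding_iff by simp_all
  then consider "b \<in> orb phi a" | "a \<notin> cycle_edges" "b = alpha a" by blast
  then show ?thesis
  proof cases
    case 1
    then show ?thesis by (rule dual_conn_orb_phi[OF a])
  next
    case 2
    then show ?thesis using dual_rel_alpha[OF a] by simp
  qed
qed

lemma dual_rel_in_dual_step_avoiding: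
  assumes "(a, b) \<in> dual_rel cycle_edges"
  shows "(a, b) \<in> dual_step_avoiding D alpha sigma cs \<and> (b, a) \<in> dual_step_avoiding D alpha sigma cs"
proof -
  from assms consider "a \<in> D" "b = phi a" | "a \<in> D" "a \<notin> cycle_edges" "b = alpha a"
    unfolding dual_rel_def by blast
  then show ?thesis
  proof cases
    case 1
    have "phi a \<in> orb phi a" by (rule orb_closed[OF self_in_orb])
    then have "b \<in> orb phi a" "a \<in> orb phi b"
      using orb_sym[OF finite_darts bij_phi 1(1)] 1(2) by blast+
    then show ?thesis using 1 phi_in unfolding dual_step_avoiding_iff by simp
  next
    case 2
    then have "alpha b = a" using alpha_alpha by simp
    moreover have "b \<notin> cycle_edges"
      using not_cycle_edge_iff[OF alpha_in[OF 2(1)]] not_cycle_edge_iff[OF 2(1)] 2 \<open>alpha b = a\<close>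
      by simp
    ultimately show ?thesis using 2 alpha_in unfolding dual_step_avoiding_iff by simp
  qed
qed

lemma rtrancl_dual_step_avoiding: "(dual_step_avoiding D alpha sigma cs)\<^sup>* = dual_conn"
proof
  show "(dual_step_avoiding D alpha sigma cs)\<^sup>* \<subseteq> dual_conn"
    using dual_step_avoiding_in_dual_conn unfolding equiv_closure_def
    by (intro rtrancl_subset_rtrancl) auto
  show "dual_conn \<subseteq> (dual_step_avoiding D alpha sigma cs)\<^sup>*"
    using dual_rel_in_dual_step_avoiding unfolding equiv_closure_def
    by (intro rtrancl_mono) auto
qed

abbreviation inside :: "'d \<Rightarrow> bool" where
  "inside \<equiv> inside_cycle D alpha sigma d0 cs"

lemma inside_iff: "inside x \<longleftrightarrow> x \<in> D \<and> (d0, x) \<notin> dual_conn"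
  by (simp add: inside_cycle_def rtrancl_dual_step_avoiding)

lemma inside_eq_if_dual_conn:
  assumes "x \<in> D" "y \<in> D" "(x, y) \<in> dual_conn"
  shows "inside x = inside y"
proof -
  have "(d0, x) \<in> dual_conn \<longleftrightarrow> (d0, y) \<in> dual_conn"
    using equiv_closure_trans[OF _ assms(3)] equiv_closure_trans[OF _ equiv_closure_sym[OF assms(3)]]
    by blast
  then show ?thesis unfolding inside_iff using assms(1,2) by blast
qed

lemma inside_phi: "x \<in> D \<Longrightarrow> inside (phi x) = inside x"
  using inside_eq_if_dual_conn[OF _ phi_in dual_rel_phi] by simp

lemma inside_funpow_phi: "x \<in> D \<Longrightarrow> inside ((phi ^^ n) x) = inside x"
  by (induction n) (simp_all add: inside_phi bij_betw_funpow_in[OF bij_phi])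

lemma inside_sigma: "x \<in> D \<Longrightarrow> inside (sigma x) = inside (alpha x)"
  using inside_eq_if_dual_conn[OF alpha_in sigma_in dual_rel_alpha_sigma] by simp

lemma inside_cycle_sides: "inside (alpha (cs ! 0)) \<noteq> inside (cs ! 0)"
proof
  assume same: "inside (alpha (cs ! 0)) = inside (cs ! 0)"
  have in_D: "cs ! 0 \<in> D" "alpha (cs ! 0) \<in> D" using first_cycle_dart_in alpha_in by auto
  have "(d0, cs ! 0) \<in> dual_conn \<and> (d0, alpha (cs ! 0)) \<in> dual_conn"
  proof (cases "(d0, cs ! 0) \<in> dual_conn")
    case True
    then show ?thesis using same in_D unfolding inside_iff by blast
  next
    case False
    consider "(cs ! 0, d0) \<in> dual_conn" | "(alpha (cs ! 0), d0) \<in> dual_conn"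
      using dual_conn_cover[OF base_dart] by blast
    then have "(d0, alpha (cs ! 0)) \<in> dual_conn"
    proof cases
      case 1
      then show ?thesis using False equiv_closure_sym[OF 1] by blast
    qed (rule equiv_closure_sym)
    then show ?thesis using same in_D unfolding inside_iff by blast
  qed
  then have "(cs ! 0, alpha (cs ! 0)) \<in> dual_conn"
    using equiv_closure_trans[OF equiv_closure_sym] by (elim conjE)
  then show False using cycle_sides_separated by blast
qed

lemma inside_alpha_iff:
  assumes x: "x \<in> D" shows "inside (alpha x) \<noteq> inside x \<longleftrightarrow> x \<in> cycle_edges"
proof
  assume "x \<in> cycle_edges"
  then obtain i where i: "i < len" "x = cs ! i \<or> x = alpha (cs ! i)"
    unfolding cycle_edges_def by (auto simp: in_set_conv_nth)
  have "inside (cs ! i) = inside (cs ! 0)" "inside (alpha (cs ! i)) = inside (alpha (cs ! 0))"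
    using cycle_sides_connected[OF i(1)] inside_eq_if_dual_conn first_cycle_dart_in
      cycle_dart_in[OF i(1)] alpha_in by metis+
  then show "inside (alpha x) \<noteq> inside x"
    using i(2) inside_cycle_sides alpha_alpha[OF cycle_dart_in[OF i(1)]] by auto
next
  assume "inside (alpha x) \<noteq> inside x"
  then show "x \<in> cycle_edges"
    using inside_eq_if_dual_conn[OF x alpha_in[OF x]] dual_rel_alpha[OF x] by metis
qed

lemma nxt_surj:
  assumes j: "j < len" shows "\<exists>i<len. nxt i = j"
proof -
  define i where "i = (j + len - 1) mod len"
  have "i < len" using j unfolding i_def by (intro mod_less_divisor) linarith
  moreover have "Suc (j + len - 1) = j + len" using j by simp
  then have "nxt i = j" unfolding nxt_def i_def using j by (simp add: mod_Suc_eq)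
  ultimately show ?thesis by blast
qed

lemma cycle_edges_through_vertex:
  assumes d: "d \<in> D" and x: "x \<in> orb sigma d" "x \<in> cycle_edges"
  obtains i where "i < len" "orb sigma d \<inter> cycle_edges = {cs ! nxt i, alpha (cs ! i)}"
proof -
  obtain i where i: "i < len" "vert (cs ! nxt i) = vert d"
  proof -
    consider j where "j < len" "x = cs ! j" | j where "j < len" "x = alpha (cs ! j)"
      using x(2) unfolding cycle_edges_def by (auto simp: in_set_conv_nth)
    then show thesis
    proof cases
      case 1
      then obtain i where "i < len" "nxt i = 1 * j" using nxt_surj by auto
      then show thesis using that 1 x(1) orb_sigma_vert[OF d] by auto
    next
      case 2
      then show thesis using that vert_alpha_cycle x(1) orb_sigma_vert[OF d] by auto
    qed
  qed
  have "cs ! nxt i \<in> cycle_edges" "alpha (cs ! i) \<in> cycle_edges"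
    using i(1) nxt_less unfolding cycle_edges_def by auto
  moreover have "cs ! nxt i \<in> orb sigma d" "alpha (cs ! i) \<in> orb sigma d"
    using i vert_alpha_cycle[OF i(1)] cycle_dart_in nxt_less alpha_in orb_sigma_vert[OF d] by auto
  moreover have "y = cs ! nxt i \<or> y = alpha (cs ! i)" if "y \<in> orb sigma d" "y \<in> cycle_edges" for y
    using cycle_edges_at_vertex[OF i(1) that(2)] that(1) i(2) orb_sigma_vert[OF d] by simp
  ultimately show thesis using that i(1) by blast
qed

lemma dual_conn_at_free_vertex:
  assumes y: "y \<in> D" and free: "orb sigma y \<inter> cycle_edges = {}" and z: "z \<in> orb sigma y"
  shows "(y, z) \<in> dual_conn"
proof -
  have "(y, (sigma ^^ n) y) \<in> dual_conn" for n
  proof (induction n)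
    case (Suc n)
    have "(sigma ^^ n) y \<in> orb sigma y" by (rule funpow_in_orb)
    then have "(sigma ^^ n) y \<notin> cycle_edges" using free by blast
    moreover have "(sigma ^^ n) y \<in> D" by (rule bij_betw_funpow_in[OF bij_sigma y])
    ultimately show ?case using equiv_closure_trans[OF Suc.IH dual_rel_sigma] by simp
  qed simp
  then show ?thesis using z unfolding orb_def by blast
qed

end

section \<open>Label changes around a vertex\<close>

lemma changes_ones_then_zeros:
  fixes L :: "nat \<Rightarrow> nat"
  assumes per: "L n = L 0" and k: "0 < k" "k < n"
    and ones: "\<forall>i<k. L i = 1" and zeros: "\<forall>i. k \<le> i \<and> i < n \<longrightarrow> L i = 0"
  shows "{i. i < n \<and> L i \<noteq> L (Suc i)} = {k - 1, n - 1}"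
proof -
  have L: "L i = (if i < k then 1 else 0)" if "i < n" for i
    using that ones zeros by simp
  have "L n = 1" using per ones k by simp
  then have "i < n \<and> L i \<noteq> L (Suc i) \<longleftrightarrow> i = k - 1 \<or> i = n - 1" for i
    using L[of i] L[of "Suc i"] k by (cases "Suc i < n") auto
  then show ?thesis by blast
qed

lemma constant_without_changes:
  fixes L :: "nat \<Rightarrow> 'a"
  assumes "\<And>j. s \<le> j \<Longrightarrow> j < e \<Longrightarrow> L (Suc j) = L j" "s \<le> t" "t \<le> e"
  shows "L t = L s"
  using assms(2,3) by (induction t rule: dec_induct) (use assms(1) in auto)

lemma runs_between_two_changes:
  fixes L :: "nat \<Rightarrow> 'a"
  assumes per: "\<And>i. L (i + n) = L i"
    and changes: "{i. i < n \<and> L i \<noteq> L (Suc i)} = {a, b}" and ab: "a < b"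
  shows "b < n" and "L (Suc b) \<noteq> L (Suc a)"
    and "Suc a \<le> t \<Longrightarrow> t \<le> b \<Longrightarrow> L t = L (Suc a)"
    and "Suc b \<le> t \<Longrightarrow> t \<le> a + n \<Longrightarrow> L t = L (Suc b)"
proof -
  have "a \<in> {i. i < n \<and> L i \<noteq> L (Suc i)}" "b \<in> {i. i < n \<and> L i \<noteq> L (Suc i)}"
    unfolding changes by simp_all
  then have b: "b < n" and La: "L (Suc a) \<noteq> L a" by auto
  then show "b < n" by simp
  have no_change: "L (Suc j) = L j" if "j < n" "j \<noteq> a" "j \<noteq> b" for j
  proof -
    have "j \<notin> {i. i < n \<and> L i \<noteq> L (Suc i)}" using that changes by simp
    then show ?thesis using that(1) by simp
  qed
  show "L t = L (Suc a)" if "Suc a \<le> t" "t \<le> b" for t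
  proof (rule constant_without_changes[OF _ that])
    fix j assume "Suc a \<le> j" "j < b"
    then show "L (Suc j) = L j" using no_change b by simp
  qed
  have run2: "L t = L (Suc b)" if "Suc b \<le> t" "t \<le> a + n" for t
  proof (rule constant_without_changes[OF _ that])
    fix j assume j: "Suc b \<le> j" "j < a + n"
    show "L (Suc j) = L j"
    proof (cases "j < n")
      case False
      then have "j - n < a" "Suc j = Suc (j - n) + n" "j = (j - n) + n" using j by auto
      moreover have "L (Suc (j - n)) = L (j - n)"
        using no_change[of "j - n"] \<open>j - n < a\<close> ab b by simp
      ultimately show ?thesis using per by metis
    qed (use no_change j ab in simp)
  qed
  then show "Suc b \<le> t \<Longrightarrow> t \<le> a + n \<Longrightarrow> L t = L (Suc b)" by blast
  have "L (Suc b) = L a"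
    using run2[of "a + n"] per[of a] b by simp
  then show "L (Suc b) \<noteq> L (Suc a)" using La by simp
qed

lemma ones_then_zeros_of_two_changes:
  fixes L :: "nat \<Rightarrow> nat"
  assumes per: "\<And>i. L (i + n) = L i" and bin: "\<And>i. L i \<in> {0, 1}"
    and two: "card {i. i < n \<and> L i \<noteq> L (Suc i)} = 2"
  shows "\<exists>r k. 0 < k \<and> k < n \<and> (\<forall>i<k. L (r + i) = 1) \<and> (\<forall>i. k \<le> i \<and> i < n \<longrightarrow> L (r + i) = 0)"
proof -
  obtain a b where ab: "{i. i < n \<and> L i \<noteq> L (Suc i)} = {a, b}" "a < b"
  proof -
    obtain a b where ab: "{i. i < n \<and> L i \<noteq> L (Suc i)} = {a, b}" "a \<noteq> b"
      using two unfolding card_2_iff by blast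
    show thesis
    proof (cases "a < b")
      case False
      then show thesis using that[of b a] ab by (simp add: insert_commute)
    qed (use that ab in simp)
  qed
  note b = runs_between_two_changes(1)[OF per ab]
    and runs = runs_between_two_changes(2)[OF per ab]
    and run1 = runs_between_two_changes(3)[OF per ab]
    and run2 = runs_between_two_changes(4)[OF per ab]
  show ?thesis
  proof (cases "L (Suc a) = 1")
    case True
    then have "L (Suc b) = 0" using runs bin[of "Suc b"] by auto
    have "L (Suc a + i) = 1" if "i < b - a" for i
      using run1[of "Suc a + i"] that True by simp
    moreover have "L (Suc a + i) = 0" if "b - a \<le> i" "i < n" for i
      using run2[of "Suc a + i"] that ab(2) \<open>L (Suc b) = 0\<close> by simp
    ultimately show ?thesis using ab(2) b by (intro exI[of _ "Suc a"] exI[of _ "b - a"]) simp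
  next
    case False
    then have "L (Suc a) = 0" "L (Suc b) = 1" using runs bin[of "Suc a"] bin[of "Suc b"] by auto
    have "L (Suc b + i) = 1" if "i < a + n - b" for i
      using run2[of "Suc b + i"] that \<open>L (Suc b) = 1\<close> by simp
    moreover have "L (Suc b + i) = 0" if "a + n - b \<le> i" "i < n" for i
    proof -
      define j where "j = Suc a + (i - (a + n - b))"
      have j: "Suc b + i = j + n" "Suc a \<le> j" "j \<le> b"
        using that ab(2) b unfolding j_def by simp_all
      have "L (Suc b + i) = L j" unfolding j(1) by (rule per)
      also have "\<dots> = L (Suc a)" by (rule run1[OF j(2,3)])
      finally show ?thesis using \<open>L (Suc a) = 0\<close> by simp
    qed
    ultimately show ?thesis using ab(2) b by (intro exI[of _ "Suc b"] exI[of _ "a + n - b"]) simp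
  qed
qed

lemma flip_labels_eq_iff:
  fixes a b :: nat
  assumes "a \<in> {0, 1}" "b \<in> {0, 1}"
  shows "(if p then 1 - a else a) = (if q then 1 - b else b) \<longleftrightarrow> (a = b \<longleftrightarrow> (p \<longleftrightarrow> q))"
  using assms by auto

context comb_map
begin

definition ones_then_zeros :: "('d \<Rightarrow> nat) \<Rightarrow> 'd \<Rightarrow> bool" where
  "ones_then_zeros l d \<longleftrightarrow> (\<exists>k. 0 < k \<and> k < card (orb sigma d) \<and>
     (\<forall>i<k. l ((sigma ^^ i) d) = 1) \<and> (\<forall>i. k \<le> i \<and> i < card (orb sigma d) \<longrightarrow> l ((sigma ^^ i) d) = 0))"

definition label_changes :: "('d \<Rightarrow> nat) \<Rightarrow> 'd \<Rightarrow> 'd set" where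
  "label_changes l d = {x \<in> orb sigma d. l x \<noteq> l (sigma x)}"

lemma card_label_changes:
  assumes "d \<in> D"
  shows "card (label_changes l d) =
    card {i. i < card (orb sigma d) \<and> l ((sigma ^^ i) d) \<noteq> l ((sigma ^^ Suc i) d)}"
  unfolding label_changes_def card_orb_filter[OF finite_darts bij_sigma assms] by simp

lemma funpow_sigma_period:
  "d \<in> D \<Longrightarrow> (sigma ^^ (i + card (orb sigma d))) d = (sigma ^^ i) d"
  using orb_funpow_enum(2)[OF finite_darts bij_sigma] by (simp add: funpow_add)

lemma card_label_changes_ones_then_zeros:
  assumes d: "d \<in> D" and "ones_then_zeros l d"
  shows "card (label_changes l d) = 2"
proof -
  define n where "n = card (orb sigma d)"
  obtain k where k: "0 < k" "k < n" "\<forall>i<k. l ((sigma ^^ i) d) = 1"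
    "\<forall>i. k \<le> i \<and> i < n \<longrightarrow> l ((sigma ^^ i) d) = 0"
    using assms(2) unfolding ones_then_zeros_def n_def by blast
  have "l ((sigma ^^ n) d) = l ((sigma ^^ 0) d)"
    using funpow_sigma_period[OF d, of 0] unfolding n_def by simp
  then have "{i. i < n \<and> l ((sigma ^^ i) d) \<noteq> l ((sigma ^^ Suc i) d)} = {k - 1, n - 1}"
    using changes_ones_then_zeros[of "\<lambda>i. l ((sigma ^^ i) d)"] k by blast
  then show ?thesis unfolding card_label_changes[OF d] n_def[symmetric] using k by simp
qed

lemma ones_then_zeros_of_card_label_changes:
  assumes d: "d \<in> D" and bin: "\<forall>x\<in>D. l x \<in> {0, 1}" and two: "card (label_changes l d) = 2"
  obtains d' where "d' \<in> orb sigma d" "ones_then_zeros l d'"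
proof -
  define n where "n = card (orb sigma d)"
  have "\<exists>r k. 0 < k \<and> k < n \<and> (\<forall>i<k. l ((sigma ^^ (r + i)) d) = 1)
      \<and> (\<forall>i. k \<le> i \<and> i < n \<longrightarrow> l ((sigma ^^ (r + i)) d) = 0)"
  proof (rule ones_then_zeros_of_two_changes)
    show "l ((sigma ^^ (i + n)) d) = l ((sigma ^^ i) d)" for i
      using funpow_sigma_period[OF d] unfolding n_def by simp
    show "l ((sigma ^^ i) d) \<in> {0, 1}" for i
      using bin bij_betw_funpow_in[OF bij_sigma d] by blast
    show "card {i. i < n \<and> l ((sigma ^^ i) d) \<noteq> l ((sigma ^^ Suc i) d)} = 2"
      using two unfolding card_label_changes[OF d] n_def .
  qed
  then obtain r k where rk: "0 < k" "k < n" "\<forall>i<k. l ((sigma ^^ (r + i)) d) = 1"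
    "\<forall>i. k \<le> i \<and> i < n \<longrightarrow> l ((sigma ^^ (r + i)) d) = 0"
    by blast
  define d' where "d' = (sigma ^^ r) d"
  have d': "d' \<in> orb sigma d" unfolding d'_def by (rule funpow_in_orb)
  have "card (orb sigma d') = n"
    unfolding n_def using orb_eq[OF finite_darts bij_sigma d d'] by simp
  moreover have "(sigma ^^ i) d' = (sigma ^^ (r + i)) d" for i
    unfolding d'_def by (metis add.commute comp_apply funpow_add)
  ultimately have "ones_then_zeros l d'"
    unfolding ones_then_zeros_def using rk by auto
  then show thesis using that d' by blast
qed

lemma induced_orientation_iff_label_change:
  assumes "x \<in> D" "(l x = l (sigma x)) \<noteq> (l (alpha x) = l (sigma (alpha x)))"
  shows "x \<in> induced_orientation D alpha sigma l \<longleftrightarrow> l x \<noteq> l (sigma x)"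
  using assms unfolding induced_orientation_def by auto

lemma label_changes_eq_orientation:
  assumes "d \<in> D" "\<And>x. x \<in> D \<Longrightarrow> (l x = l (sigma x)) \<noteq> (l (alpha x) = l (sigma (alpha x)))"
  shows "label_changes l d = orb sigma d \<inter> induced_orientation D alpha sigma l"
  using induced_orientation_iff_label_change assms orb_subset[OF bij_sigma assms(1)]
  unfolding label_changes_def by blast

end

section \<open>Reversing a directed cycle\<close>

locale cycle_reversal =
  fixes D :: "'d set" and alpha sigma :: "'d \<Rightarrow> 'd" and vert :: "'d \<Rightarrow> 'v"
    and d0 :: 'd and black :: "'v \<Rightarrow> bool" and s0 s1 :: 'v
    and lab :: "'d \<Rightarrow> nat" and cs :: "'d list"
  assumes quad: "quadrangulation D alpha sigma vert d0 black s0 s1"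
    and labeling: "strong_labeling D alpha sigma vert d0 s0 s1 lab"
    and dicycle: "directed_cycle alpha vert (induced_orientation D alpha sigma lab) cs"

sublocale cycle_reversal \<subseteq> plane_cycle D alpha sigma vert cs d0
proof unfold_locales
  show "set cs \<subseteq> D" "length cs \<ge> 3" "distinct (map vert cs)"
    "\<And>i. i < length cs \<Longrightarrow> vert (alpha (cs ! i)) = vert (cs ! ((i + 1) mod length cs))"
    using dicycle unfolding directed_cycle_def induced_orientation_def by auto
qed (use quad in \<open>simp_all add: quadrangulation_def\<close>)

context cycle_reversal
begin

abbreviation orient :: "'d set" where
  "orient \<equiv> induced_orientation D alpha sigma lab"

definition flipped :: "'d \<Rightarrow> nat" where
  "flipped x = (if inside x then 1 - lab x else lab x)"

lemma lab_01:
  assumes "x \<in> D" shows "lab x \<in> {0, 1}"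
proof -
  have "\<forall>d\<in>D. lab d \<in> {0, 1}" using labeling unfolding strong_labeling_def by (elim conjE)
  then show ?thesis using assms by blast
qed

lemma lab_s0_s1:
  assumes "x \<in> D" shows "(vert x = s0 \<longrightarrow> lab x = 0) \<and> (vert x = s1 \<longrightarrow> lab x = 1)"
proof -
  have "\<forall>d\<in>D. (vert d = s0 \<longrightarrow> lab d = 0) \<and> (vert d = s1 \<longrightarrow> lab d = 1)"
    using labeling unfolding strong_labeling_def by (elim conjE)
  then show ?thesis using assms by blast
qed

lemma lab_edge: "x \<in> D \<Longrightarrow> (lab x = lab (sigma x)) \<noteq> (lab (alpha x) = lab (sigma (alpha x)))"
  using labeling unfolding strong_labeling_def by blast

lemma lab_ones_then_zeros:
  "v \<in> vert ` D - {s0, s1} \<Longrightarrow> \<exists>d\<in>D. vert d = v \<and> ones_then_zeros lab d"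
  using labeling unfolding strong_labeling_def ones_then_zeros_def by blast

lemma orient_iff: "x \<in> D \<Longrightarrow> x \<in> orient \<longleftrightarrow> lab x \<noteq> lab (sigma x)"
  by (rule induced_orientation_iff_label_change[OF _ lab_edge])

lemma cycle_in_orient: "set cs \<subseteq> orient"
  using dicycle unfolding directed_cycle_def by blast

lemma alpha_notin_orient: "x \<in> orient \<Longrightarrow> alpha x \<notin> orient"
  using lab_edge alpha_alpha unfolding induced_orientation_def by auto

lemma flipped_01: "x \<in> D \<Longrightarrow> flipped x \<in> {0, 1}"
  using lab_01 unfolding flipped_def by auto

lemma flipped_eq_iff:
  "x \<in> D \<Longrightarrow> y \<in> D \<Longrightarrow> flipped x = flipped y \<longleftrightarrow> (lab x = lab y \<longleftrightarrow> (inside x \<longleftrightarrow> inside y))"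
  unfolding flipped_def by (rule flip_labels_eq_iff[OF lab_01 lab_01])

lemma flipped_edge:
  assumes x: "x \<in> D"
  shows "(flipped x = flipped (sigma x)) \<noteq> (flipped (alpha x) = flipped (sigma (alpha x)))"
proof -
  have "inside (sigma x) = inside (alpha x)" "inside (sigma (alpha x)) = inside x"
    using inside_sigma[OF x] inside_sigma[OF alpha_in[OF x]] alpha_alpha[OF x] by simp_all
  then show ?thesis
    using flipped_eq_iff[OF x sigma_in[OF x]] flipped_eq_iff[OF alpha_in[OF x] sigma_in[OF alpha_in[OF x]]]
      lab_edge[OF x] by auto
qed

lemma flipped_orient_iff:
  assumes x: "x \<in> D"
  shows "x \<in> induced_orientation D alpha sigma flipped \<longleftrightarrow> (x \<in> orient \<longleftrightarrow> x \<notin> cycle_edges)"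
proof -
  have "inside (sigma (alpha x)) = inside x"
    using inside_sigma[OF alpha_in[OF x]] alpha_alpha[OF x] by simp
  then have "flipped (alpha x) = flipped (sigma (alpha x)) \<longleftrightarrow>
      (lab (alpha x) = lab (sigma (alpha x)) \<longleftrightarrow> (inside (alpha x) \<longleftrightarrow> inside x))"
    using flipped_eq_iff[OF alpha_in[OF x] sigma_in[OF alpha_in[OF x]]] by simp
  then show ?thesis
    using inside_alpha_iff[OF x] x unfolding induced_orientation_def by auto
qed

lemma flipped_orientation: "induced_orientation D alpha sigma flipped = reverse_cycle alpha orient cs"
proof (intro set_eqI)
  fix x
  have "alpha ` set cs \<inter> orient = {}"
    using cycle_in_orient alpha_notin_orient by blast
  moreover have "orient \<subseteq> D" "alpha ` set cs \<subseteq> D"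
    unfolding induced_orientation_def using cycle_darts alpha_in by auto
  ultimately show "x \<in> induced_orientation D alpha sigma flipped \<longleftrightarrow> x \<in> reverse_cycle alpha orient cs"
    using flipped_orient_iff[of x] cycle_in_orient
    unfolding reverse_cycle_def cycle_edges_def induced_orientation_def[of _ _ _ flipped] by blast
qed

lemma lab_inner_face:
  assumes "d \<in> D" "orb phi d \<noteq> orb phi d0"
  obtains k where "lab ((phi ^^ k) d) = 0" "lab ((phi ^^ (k + 1)) d) = 0"
    "lab ((phi ^^ (k + 2)) d) = 1" "lab ((phi ^^ (k + 3)) d) = 1"
proof -
  have "\<forall>d\<in>D. orb phi d \<noteq> orb phi d0 \<longrightarrow>
      (\<exists>k. lab ((phi ^^ k) d) = 0 \<and> lab ((phi ^^ (k + 1)) d) = 0 \<and>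
        lab ((phi ^^ (k + 2)) d) = 1 \<and> lab ((phi ^^ (k + 3)) d) = 1)"
    using labeling unfolding strong_labeling_def by (elim conjE)
  then show thesis using that assms by blast
qed

lemma lab_outer_face:
  assumes "d \<in> orb phi d0" "vert d = s0"
  shows "lab d = 0 \<and> lab (phi d) = 0 \<and> lab ((phi ^^ 2) d) = 1 \<and> lab ((phi ^^ 3) d) = 1"
proof -
  have "\<forall>d\<in>orb phi d0. vert d = s0 \<longrightarrow>
      lab d = 0 \<and> lab (phi d) = 0 \<and> lab ((phi ^^ 2) d) = 1 \<and> lab ((phi ^^ 3) d) = 1"
    using labeling unfolding strong_labeling_def by (elim conjE)
  then show ?thesis using assms by blast
qed

lemma cycle_avoids_s0_s1:
  assumes "x \<in> cycle_edges" shows "vert x \<noteq> s0" "vert x \<noteq> s1"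
proof -
  have no_out: "vert c \<noteq> s0 \<and> vert c \<noteq> s1" if "c \<in> set cs" for c
  proof -
    have c: "c \<in> D" "lab c \<noteq> lab (sigma c)"
      using that cycle_darts cycle_in_orient orient_iff by auto
    then show ?thesis using lab_s0_s1[OF c(1)] lab_s0_s1[OF sigma_in[OF c(1)]] vert_sigma[OF c(1)]
      by auto
  qed
  from assms consider i where "i < len" "x = cs ! i" | i where "i < len" "x = alpha (cs ! i)"
    unfolding cycle_edges_def by (auto simp: in_set_conv_nth)
  then have "vert x \<noteq> s0 \<and> vert x \<noteq> s1"
  proof cases
    case 2
    then show ?thesis using no_out[of "cs ! nxt i"] nxt_less vert_alpha_cycle by simp
  qed (use no_out in simp)
  then show "vert x \<noteq> s0" "vert x \<noteq> s1" by simp_all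
qed

lemma outer_face_outside: "x \<in> orb phi d0 \<Longrightarrow> \<not> inside x"
  using dual_conn_orb_phi[OF base_dart] unfolding inside_iff by blast

lemma s0_s1_outside:
  assumes x: "x \<in> D" "vert x = s0 \<or> vert x = s1"
  shows "\<not> inside x"
proof -
  have "{v \<in> vert ` orb phi d0. black v} = {s0, s1}"
    using quad unfolding quadrangulation_def by (elim conjE)
  then have "vert x \<in> {v \<in> vert ` orb phi d0. black v}" using x(2) by auto
  then obtain y where y: "y \<in> orb phi d0" "vert y = vert x" by (auto elim: imageE)
  have yD: "y \<in> D" using y(1) orb_subset[OF bij_phi base_dart] by blast
  have "z \<notin> cycle_edges" if "z \<in> orb sigma y" for z
  proof -
    have "vert z = vert x" using that orb_sigma_vert[OF yD] y(2) by simp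
    then show ?thesis using cycle_avoids_s0_s1 x(2) by metis
  qed
  then have "orb sigma y \<inter> cycle_edges = {}" by blast
  moreover have "x \<in> orb sigma y" using orb_sigma_vert[OF yD] x(1) y(2) by simp
  ultimately have "(y, x) \<in> dual_conn" by (rule dual_conn_at_free_vertex[OF yD])
  then have "(d0, x) \<in> dual_conn"
    by (rule equiv_closure_trans[OF dual_conn_orb_phi[OF base_dart y(1)]])
  then show ?thesis unfolding inside_iff by blast
qed

lemma flipped_s0_s1:
  "x \<in> D \<Longrightarrow> (vert x = s0 \<longrightarrow> flipped x = 0) \<and> (vert x = s1 \<longrightarrow> flipped x = 1)"
  using lab_s0_s1 s0_s1_outside unfolding flipped_def by auto

lemma funpow_phi_period:
  assumes "d \<in> D" shows "(phi ^^ (m + 4)) d = (phi ^^ m) d"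
proof -
  have "card (orb phi d) = 4" using quad assms unfolding quadrangulation_def by blast
  then have "(phi ^^ 4) d = d" using orb_funpow_enum(2)[OF finite_darts bij_phi assms] by simp
  then show ?thesis by (simp add: funpow_add)
qed

text \<open>Complementing the labels \<open>0, 0, 1, 1\<close> of a face gives \<open>1, 1, 0, 0\<close>, the same cyclic
  pattern shifted by two.\<close>

lemma flipped_inner_face:
  assumes d: "d \<in> D" and bounded: "orb phi d \<noteq> orb phi d0"
  shows "\<exists>k. flipped ((phi ^^ k) d) = 0 \<and> flipped ((phi ^^ (k + 1)) d) = 0 \<and>
    flipped ((phi ^^ (k + 2)) d) = 1 \<and> flipped ((phi ^^ (k + 3)) d) = 1"
proof -
  obtain k where k: "lab ((phi ^^ k) d) = 0" "lab ((phi ^^ (k + 1)) d) = 0"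
    "lab ((phi ^^ (k + 2)) d) = 1" "lab ((phi ^^ (k + 3)) d) = 1"
    using lab_inner_face[OF assms] .
  have face: "flipped ((phi ^^ m) d) = (if inside d then 1 - lab ((phi ^^ m) d) else lab ((phi ^^ m) d))"
    for m unfolding flipped_def using inside_funpow_phi[OF d] by simp
  show ?thesis
  proof (cases "inside d")
    case True
    have f: "flipped ((phi ^^ m) d) = 1 - lab ((phi ^^ m) d)" for m
      using face True by simp
    have "(k + 2) + 2 = k + 4" "(k + 2) + 3 = (k + 1) + 4" "(k + 2) + 1 = k + 3" by simp_all
    then have "flipped ((phi ^^ (k + 2 + 2)) d) = flipped ((phi ^^ k) d)"
      "flipped ((phi ^^ (k + 2 + 3)) d) = flipped ((phi ^^ (k + 1)) d)"
      "flipped ((phi ^^ (k + 2 + 1)) d) = flipped ((phi ^^ (k + 3)) d)"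
      by (simp_all only: funpow_phi_period[OF d])
    then show ?thesis
      using k f[of k] f[of "k + 1"] f[of "k + 2"] f[of "k + 3"] by (intro exI[of _ "k + 2"]) simp
  next
    case False
    then have "flipped ((phi ^^ m) d) = lab ((phi ^^ m) d)" for m
      using face by simp
    then show ?thesis by (intro exI[of _ k]) (simp only: k simp_thms)
  qed
qed

lemma flipped_outer_face:
  assumes "d \<in> orb phi d0" "vert d = s0"
  shows "flipped d = 0 \<and> flipped (phi d) = 0 \<and> flipped ((phi ^^ 2) d) = 1 \<and> flipped ((phi ^^ 3) d) = 1"
proof -
  have "flipped ((phi ^^ m) d) = lab ((phi ^^ m) d)" for m
    using outer_face_outside orb_funpow_closed[OF assms(1)] unfolding flipped_def by simp
  from this[of 0] this[of 1] this[of 2] this[of 3] show ?thesis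
    using lab_outer_face[OF assms] by simp
qed

text \<open>Reversing the cycle trades, at each vertex of the cycle, the outgoing cycle edge for the
  incoming one, so it preserves outdegrees.\<close>

lemma card_flipped_label_changes:
  assumes d: "d \<in> D"
  shows "card (label_changes flipped d) = card (label_changes lab d)"
proof -
  have changes: "label_changes flipped d = orb sigma d \<inter> induced_orientation D alpha sigma flipped"
    "label_changes lab d = orb sigma d \<inter> orient"
    using label_changes_eq_orientation[OF d] flipped_edge lab_edge by auto
  have orb_D: "orb sigma d \<subseteq> D" by (rule orb_subset[OF bij_sigma d])
  show ?thesis
  proof (cases "orb sigma d \<inter> cycle_edges = {}")
    case True
    have "x \<in> induced_orientation D alpha sigma flipped \<longleftrightarrow> x \<in> orient" if "x \<in> orb sigma d" for x
      using flipped_orient_iff[of x] that orb_D True by blast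
    then have "orb sigma d \<inter> induced_orientation D alpha sigma flipped = orb sigma d \<inter> orient"
      by blast
    then show ?thesis unfolding changes by simp
  next
    case False
    then obtain i where i: "i < len" "orb sigma d \<inter> cycle_edges = {cs ! nxt i, alpha (cs ! i)}"
      using cycle_edges_through_vertex[OF d] by blast
    let ?out = "cs ! nxt i" and ?in = "alpha (cs ! i)"
    have out_in: "?out \<in> orient" "?in \<notin> orient"
      using cycle_in_orient alpha_notin_orient nth_mem[OF i(1)] nth_mem[OF nxt_less[OF i(1)]] by auto
    have "x \<in> induced_orientation D alpha sigma flipped \<longleftrightarrow> x = ?in \<or> (x \<in> orient \<and> x \<noteq> ?out)"
      if "x \<in> orb sigma d" for x
    proof -
      have "x \<in> cycle_edges \<longleftrightarrow> x = ?out \<or> x = ?in" using that i(2) by blast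
      then show ?thesis using flipped_orient_iff[of x] that orb_D out_in by blast
    qed
    then have "orb sigma d \<inter> induced_orientation D alpha sigma flipped
        = insert ?in (orb sigma d \<inter> orient - {?out})"
      using i(2) by blast
    moreover have "?out \<in> orb sigma d \<inter> orient" "?in \<notin> orb sigma d \<inter> orient - {?out}"
      using i(2) out_in by auto
    moreover have "finite (orb sigma d \<inter> orient)"
      using finite_subset[OF orb_D finite_darts] by blast
    ultimately show ?thesis
      unfolding changes by (metis card_insert_disjoint finite_Diff card_Suc_Diff1)
  qed
qed

lemma flipped_ones_then_zeros:
  assumes v: "v \<in> vert ` D - {s0, s1}"
  shows "\<exists>d\<in>D. vert d = v \<and> ones_then_zeros flipped d"
proof -
  obtain d where d: "d \<in> D" "vert d = v" "ones_then_zeros lab d"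
    using lab_ones_then_zeros[OF v] by blast
  have "card (label_changes flipped d) = 2"
    using card_label_changes_ones_then_zeros[OF d(1,3)] card_flipped_label_changes[OF d(1)] by simp
  then obtain d' where d': "d' \<in> orb sigma d" "ones_then_zeros flipped d'"
    using ones_then_zeros_of_card_label_changes[OF d(1)] flipped_01 by blast
  then show ?thesis using d orb_sigma_vert by blast
qed

lemma strong_labeling_flipped: "strong_labeling D alpha sigma vert d0 s0 s1 flipped"
  unfolding strong_labeling_def
  using flipped_01 flipped_s0_s1 flipped_ones_then_zeros[unfolded ones_then_zeros_def]
    flipped_edge flipped_inner_face flipped_outer_face
  by blast

end

theorem lemma25:
  fixes D :: "'d set" and alpha sigma :: "'d \<Rightarrow> 'd" and vert :: "'d \<Rightarrow> 'v"
    and d0 :: 'd and black :: "'v \<Rightarrow> bool" and s0 s1 :: 'v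
    and lab :: "'d \<Rightarrow> nat" and cs :: "'d list"
  assumes "quadrangulation D alpha sigma vert d0 black s0 s1"
    and "strong_labeling D alpha sigma vert d0 s0 s1 lab"
    and "directed_cycle alpha vert (induced_orientation D alpha sigma lab) cs"
  shows "strong_labeling D alpha sigma vert d0 s0 s1
           (\<lambda>d. if inside_cycle D alpha sigma d0 cs d then 1 - lab d else lab d)
       \<and> induced_orientation D alpha sigma
           (\<lambda>d. if inside_cycle D alpha sigma d0 cs d then 1 - lab d else lab d)
         = reverse_cycle alpha (induced_orientation D alpha sigma lab) cs"
proof -
  interpret cycle_reversal D alpha sigma vert d0 black s0 s1 lab cs
    using assms by unfold_locales
  have "(\<lambda>d. if inside_cycle D alpha sigma d0 cs d then 1 - lab d else lab d) = flipped"
    by (rule ext) (simp add: flipped_def)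
  then show ?thesis using strong_labeling_flipped flipped_orientation by simp
qed

end
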